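(* Let $k$ be a finite field. Let $\mathcal S$ be a finite set of irreducible polynomials in $k[T]$, let $J, M$ be natural numbers, and for each $j\in\{1,\ldots,J\}$ let $f_j(X_1,\ldots,X_M)\in k[T][X_1,\ldots,X_M]$. Assume that there exists a sequence $\{(e_{1,n},\ldots,e_{M,n})\}_{n\ge1}$ in $\mathbb Z^M$ such that for every $Q(T)\in k[T]$ not divisible by any element of $\mathcal S$, there is $N_Q\in\mathbb N$ such that for every $n\ge N_Q$, $Q(T)$ divides $f_j(T^{e_{1,n}},\ldots,T^{e_{M,n}})$ for all $j\in\{1,\ldots,J\}$. Then there exists a sequence $\{(e'_{1,n},\ldots,e'_{M,n})\}_{n\in\mathcal N}$ in $\mathbb Z^M$ indexed by an infinite subset $\mathcal N\subset\mathbb N$ such that: (1) for each $n\in\mathcal N$, $f_j(T^{e'_{1,n}},\ldots,T^{e'_{M,n}})=0$ for all $j\in\{1,\ldots,J\}$; (2) for every $\widetilde Q(T)\in k[T]$ not divisible by $T$, there is $\widetilde N_{\widetilde Q}\in\mathbb N$ such that for every $n\in\mathcal N$ with $n\ge\widetilde N_{\widetilde Q}$, $\widetilde Q(T)$ divides $T^{e_{i,n}}-T^{e'_{i,n}}$ for all $i\in\{1,\ldots,M\}$.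
   Context: Convention on divisibility: for a polynomial $Q(T)\in k[T]$ and a rational function $P(T)\in k(T)$, one says that $Q(T)$ divides $P(T)$ if no zero of $Q(T)$ in an algebraic closure $k^{\mathrm{alg}}$ of $k$ is a pole of $P(T)/Q(T)$. (Divisibility of $Q$ by an element of $\mathcal S$, or of $\widetilde Q$ by $T$, is ordinary divisibility in $k[T]$.) Note $f_j(T^{e_{1,n}},\ldots,T^{e_{M,n}})\in k[T,T^{-1}]\subset k(T)$ since exponents may be negative. *)

theory Defs
  imports "HOL-Computational_Algebra.Computational_Algebra" "HOL-Computational_Algebra.Fraction_Field"
begin

type_synonym 'a ratfun = "'a poly fract"

definition rf_of_poly :: "'a::field poly \<Rightarrow> 'a ratfun" where
  "rf_of_poly p = Fract p 1"

definition Tpow :: "int \<Rightarrow> 'a::field ratfun" where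
  "Tpow e = rf_of_poly [:0, 1:] powi e"

text \<open>A multivariate polynomial f in k[T][X_0,...,X_(M-1)] is given by its coefficient
  function c on exponent vectors (nat \<Rightarrow> nat): finitely many nonzero coefficients, and
  only the variables X_0..X_(M-1) occur.\<close>
definition is_mpoly :: "nat \<Rightarrow> ((nat \<Rightarrow> nat) \<Rightarrow> 'a::field poly) \<Rightarrow> bool" where
  "is_mpoly M c \<longleftrightarrow> finite {\<alpha>. c \<alpha> \<noteq> 0} \<and> (\<forall>\<alpha>. c \<alpha> \<noteq> 0 \<longrightarrow> (\<forall>i\<ge>M. \<alpha> i = 0))"

definition eval_Tpow :: "nat \<Rightarrow> ((nat \<Rightarrow> nat) \<Rightarrow> 'a::field poly) \<Rightarrow> (nat \<Rightarrow> int) \<Rightarrow> 'a ratfun" where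
  "eval_Tpow M c e = (\<Sum>\<alpha>\<in>{\<alpha>. c \<alpha> \<noteq> 0}. rf_of_poly (c \<alpha>) * (\<Prod>i<M. Tpow (e i) ^ \<alpha> i))"

text \<open>Q divides the rational function P: no zero of Q (in an algebraic closure) is a pole
  of P/Q. Equivalently: P = A/B with Q dividing A and B coprime to Q (i.e. B has no common
  zero with Q).\<close>
definition rf_dvd :: "'a::field poly \<Rightarrow> 'a ratfun \<Rightarrow> bool" where
  "rf_dvd Q P \<longleftrightarrow> (\<exists>A B. B \<noteq> 0 \<and> coprime B Q \<and> Q dvd A \<and> P = Fract A B)"

end

theory Submission
  imports Defs "Jordan_Normal_Form.Matrix"
begin

(* Fix L > 0. Take the auxiliary modulus Q = (T^(N l) - 1)/(T^N - 1) with N a multiple of L and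
   l = 1 modulo the characteristic and modulo the orders of T at the primes of S not dividing T;
   then no element of S divides Q, so Q divides every f_j(T^(e_n)) for n large. After clearing
   denominators and multiplying by T^N - 1 this becomes divisibility by T^W - 1, W = N l, and a
   rotation of the exponents modulo W turns f_j(T^(e_n)) into a vanishing polynomial of degree
   below W. Its terms split into linked clusters of overlapping windows that must cancel
   separately, which imposes on e_n, modulo W, a linear system with small right-hand sides. For W
   large such a solution lifts to an exact integer solution e' congruent to e_n modulo L, and then
   every cluster of f_j(T^(e')) cancels, so f_j(T^(e')) = 0. Letting L run through m! along the
   sequence gives e', and T^(e_n) - T^(e'_n) is divisible by any Q prime to T because T has finite
   order modulo Q. *)


section \<open>Rational functions and Laurent monomials\<close>

lemma rf_of_poly_add: "rf_of_poly (p + q) = rf_of_poly p + rf_of_poly (q :: 'a::field poly)"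
  by (simp add: rf_of_poly_def)

lemma rf_of_poly_diff: "rf_of_poly (p - q) = rf_of_poly p - rf_of_poly (q :: 'a::field poly)"
  by (simp add: rf_of_poly_def)

lemma rf_of_poly_mult: "rf_of_poly (p * q) = rf_of_poly p * rf_of_poly (q :: 'a::field poly)"
  by (simp add: rf_of_poly_def)

lemma rf_of_poly_eq_iff: "rf_of_poly p = rf_of_poly q \<longleftrightarrow> p = (q :: 'a::field poly)"
  by (simp add: rf_of_poly_def eq_fract)

lemma rf_of_poly_0: "rf_of_poly (0 :: 'a::field poly) = 0"
  by (simp add: rf_of_poly_def Zero_fract_def)

lemma rf_of_poly_eq_0_iff: "rf_of_poly p = 0 \<longleftrightarrow> p = (0 :: 'a::field poly)"
  using rf_of_poly_eq_iff[of p 0] by (simp add: rf_of_poly_0)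

lemma rf_of_poly_sum: "rf_of_poly (\<Sum>k\<in>K. p k) = (\<Sum>k\<in>K. rf_of_poly (p k :: 'a::field poly))"
  by (induction K rule: infinite_finite_induct) (auto simp: rf_of_poly_0 rf_of_poly_add)

lemma rf_of_poly_power: "rf_of_poly (p ^ n) = rf_of_poly (p :: 'a::field poly) ^ n"
  by (induction n) (simp add: rf_of_poly_def One_fract_def, simp add: rf_of_poly_mult)

lemma Tpow_add: "Tpow (a + b) = (Tpow a * Tpow b :: 'a::field ratfun)"
  unfolding Tpow_def by (rule power_int_add) (simp add: rf_of_poly_eq_0_iff)

lemma Tpow_of_nat: "Tpow (int n) = (rf_of_poly ([:0, 1:] ^ n) :: 'a::field ratfun)"
  unfolding Tpow_def by (simp add: rf_of_poly_power)

lemma Tpow_power: "Tpow a ^ n = (Tpow (int n * a) :: 'a::field ratfun)"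
  unfolding Tpow_def by (simp add: power_int_power' mult.commute)

lemma Tpow_mult_X_power:
  assumes "a + int t \<ge> 0"
  shows "Tpow a * rf_of_poly ([:0, 1:] ^ t) = rf_of_poly ([:0, 1::'a::field:] ^ nat (a + int t))"
proof -
  have "Tpow a * rf_of_poly ([:0, 1:] ^ t) = (Tpow (a + int t) :: 'a ratfun)"
    by (simp add: Tpow_add Tpow_of_nat)
  also have "\<dots> = rf_of_poly ([:0, 1:] ^ nat (a + int t))"
    using assms by (metis Tpow_of_nat int_nat_eq)
  finally show ?thesis .
qed

definition monomial_exponent :: "nat \<Rightarrow> (nat \<Rightarrow> nat) \<Rightarrow> (nat \<Rightarrow> int) \<Rightarrow> int" where
  "monomial_exponent M \<alpha> x = (\<Sum>i<M. int (\<alpha> i) * x i)"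

lemma monomial_exponent_diff:
  "(\<Sum>i<M. (int (\<alpha> i) - int (\<beta> i)) * x i) = monomial_exponent M \<alpha> x - monomial_exponent M \<beta> x"
  unfolding monomial_exponent_def by (simp add: sum_subtractf left_diff_distrib)

lemma eval_Tpow_eq_sum_Tpow:
  "eval_Tpow M c x = (\<Sum>\<alpha> | c \<alpha> \<noteq> 0. rf_of_poly (c \<alpha>) * Tpow (monomial_exponent M \<alpha> x))"
proof -
  have "(\<Prod>i<M. Tpow (x i) ^ \<alpha> i) = (Tpow (monomial_exponent M \<alpha> x) :: 'a ratfun)" for \<alpha>
    unfolding monomial_exponent_def
    by (induction M) (simp add: Tpow_def, simp add: Tpow_power Tpow_add mult.commute)
  thus ?thesis unfolding eval_Tpow_def by simp
qed

lemma sum_Tpow_mult_X_power: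
  assumes "\<forall>k\<in>K. g k + int t \<ge> 0"
  shows "(\<Sum>k\<in>K. rf_of_poly (c k) * Tpow (g k)) * rf_of_poly ([:0, 1:] ^ t)
       = rf_of_poly (\<Sum>k\<in>K. c k * [:0, 1::'a::field:] ^ nat (g k + int t))"
  using assms
  by (simp add: sum_distrib_right mult.assoc Tpow_mult_X_power rf_of_poly_sum rf_of_poly_mult)

section \<open>Coprimality and divisibility in \<open>k(T)\<close>\<close>

lemma euclidean_bezout:
  fixes a b :: "'a::euclidean_ring"
  shows "\<exists>g u v. g dvd a \<and> g dvd b \<and> u * a + v * b = g"
proof (induction b arbitrary: a rule: measure_induct_rule[of euclidean_size])
  case (less b a)
  show ?case
  proof (cases "b = 0")
    case True
    thus ?thesis by (intro exI[of _ a] exI[of _ 1] exI[of _ 0]) simp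
  next
    case False
    hence "euclidean_size (a mod b) < euclidean_size b" by (rule mod_size_less)
    then obtain g u v where g: "g dvd b" "g dvd a mod b" "u * b + v * (a mod b) = g"
      using less by blast
    have "g dvd a" using g(1,2) by (metis dvd_add dvd_mult div_mult_mod_eq)
    moreover have "v * a + (u - v * (a div b)) * b = g"
      using g(3) by (simp add: algebra_simps flip: minus_div_mult_eq_mod)
    ultimately show ?thesis using g(1) by blast
  qed
qed

lemma coprime_imp_bezout:
  fixes a b :: "'a::euclidean_ring"
  assumes "coprime a b"
  shows "\<exists>u v. u * a + v * b = 1"
proof -
  obtain g u v where g: "g dvd a" "g dvd b" "u * a + v * b = g" using euclidean_bezout by blast
  then obtain h where h: "1 = g * h" using assms by (meson coprime_common_divisor dvdE)
  have "(h * u) * a + (h * v) * b = h * (u * a + v * b)" by (simp add: algebra_simps)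
  also have "\<dots> = 1" using g(3) h by (simp add: mult.commute)
  finally show ?thesis by blast
qed

lemma coprime_dvd_mult_cancel:
  fixes B Q R :: "'a::euclidean_ring"
  assumes "coprime B Q" "Q dvd R * B"
  shows "Q dvd R"
proof -
  obtain u v where uv: "u * B + v * Q = 1" using coprime_imp_bezout assms(1) by blast
  have "R = R * (u * B + v * Q)" using uv by simp
  also have "\<dots> = u * (R * B) + (v * R) * Q" by (simp add: algebra_simps)
  finally have "R = u * (R * B) + (v * R) * Q" .
  moreover have "Q dvd u * (R * B) + (v * R) * Q" using assms(2) by simp
  ultimately show ?thesis by simp
qed

lemma coprime_mult_left_euclidean:
  fixes a b Q :: "'a::euclidean_ring"
  assumes "coprime a Q" "coprime b Q"
  shows "coprime (a * b) Q"
proof -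
  obtain u1 v1 where 1: "u1 * a + v1 * Q = 1" using coprime_imp_bezout assms(1) by blast
  obtain u2 v2 where 2: "u2 * b + v2 * Q = 1" using coprime_imp_bezout assms(2) by blast
  have "(u1 * u2) * (a * b) + (u1 * a * v2 + v1 * (u2 * b + v2 * Q)) * Q
      = (u1 * a + v1 * Q) * (u2 * b + v2 * Q)" by (simp add: algebra_simps)
  hence bezout: "(u1 * u2) * (a * b) + (u1 * a * v2 + v1 * (u2 * b + v2 * Q)) * Q = 1"
    using 1 2 by simp
  show ?thesis
  proof (rule coprimeI)
    fix c assume "c dvd a * b" "c dvd Q"
    hence "c dvd (u1 * u2) * (a * b) + (u1 * a * v2 + v1 * (u2 * b + v2 * Q)) * Q" by simp
    thus "is_unit c" using bezout by simp
  qed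
qed

lemma coprime_power_left_euclidean:
  fixes a Q :: "'a::euclidean_ring"
  shows "coprime a Q \<Longrightarrow> coprime (a ^ n) Q"
  by (induction n) (auto intro: coprime_mult_left_euclidean)

lemma irreducible_imp_coprime:
  fixes p :: "'a::algebraic_semidom"
  assumes "irreducible p" "\<not> p dvd a"
  shows "coprime p a"
proof (rule coprimeI)
  fix c assume "c dvd p" "c dvd a"
  thus "is_unit c" using irreducibleD'[OF assms(1)] assms(2) dvd_trans by blast
qed

lemma coprime_X_power:
  assumes "\<not> [:0, 1:] dvd (Q :: 'a::field poly)"
  shows "coprime ([:0, 1:] ^ n) Q"
  using irreducible_imp_coprime[OF irreducible_linear_field_poly assms]
  by (intro coprime_power_left_euclidean) simp

lemma rf_dvdI:
  assumes "B \<noteq> 0" "coprime B Q" "Q dvd A" "P * rf_of_poly B = rf_of_poly A"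
  shows "rf_dvd Q (P :: 'a::field ratfun)"
proof -
  have "P = rf_of_poly A / rf_of_poly B"
    using assms(1,4) by (metis nonzero_mult_div_cancel_right rf_of_poly_eq_0_iff)
  also have "\<dots> = Fract A B" by (simp add: rf_of_poly_def)
  finally show ?thesis unfolding rf_dvd_def using assms by blast
qed

lemma rf_dvd_imp_dvd:
  assumes "rf_dvd Q P" "P * rf_of_poly C = rf_of_poly R"
  shows "Q dvd (R :: 'a::field poly)"
proof -
  obtain A B where AB: "B \<noteq> 0" "coprime B Q" "Q dvd A" "P = Fract A B"
    using assms(1) unfolding rf_dvd_def by blast
  have "Fract (A * C) B = Fract R 1" using assms(2) AB(4) by (simp add: rf_of_poly_def)
  hence "A * C = R * B" using AB(1) by (simp add: eq_fract)
  hence "Q dvd R * B" using AB(3) by (metis dvd_mult2)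
  thus ?thesis using AB(2) by (rule coprime_dvd_mult_cancel[rotated])
qed

section \<open>Powers of \<open>T\<close> modulo a polynomial\<close>

lemma power_minus_one_dvd_power_diff:
  fixes x :: "'a::comm_ring_1"
  assumes "a mod d = b mod d"
  shows "(x ^ d - 1) dvd (x ^ a - x ^ b)"
proof -
  have *: "(x ^ d - 1) dvd (x ^ a - x ^ b)" if "a mod d = b mod d" "b \<le> a" for a b
  proof -
    have "d dvd a - b" using that by (simp add: mod_eq_dvd_iff_nat)
    then obtain q where "a - b = d * q" ..
    hence "a = b + d * q" using that(2) by simp
    hence "x ^ a - x ^ b = x ^ b * ((x ^ d) ^ q - 1)" by (simp add: power_add power_mult algebra_simps)
    thus ?thesis by (simp add: power_diff_1_eq)
  qed
  show ?thesis
  proof (cases "b \<le> a")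
    case False
    hence "(x ^ d - 1) dvd x ^ b - x ^ a" using *[of b a] assms by simp
    hence "(x ^ d - 1) dvd - (x ^ b - x ^ a)" by (simp only: dvd_minus_iff)
    thus ?thesis by simp
  qed (use * assms in blast)
qed

lemma dvd_power_minus_one_gcd:
  fixes x :: "'a::comm_ring_1"
  assumes "p dvd x ^ a - 1" "p dvd x ^ b - 1"
  shows "p dvd x ^ gcd a b - 1"
  using assms
proof (induction a b rule: gcd_nat_induct)
  case (step m n)
  have "(x ^ n - 1) dvd (x ^ m - x ^ (m mod n))"
    by (rule power_minus_one_dvd_power_diff) simp
  hence "p dvd x ^ m - x ^ (m mod n)" using step.prems(2) by (rule dvd_trans[rotated])
  hence "p dvd (x ^ m - 1) - (x ^ m - x ^ (m mod n))" using step.prems(1) by (rule dvd_diff[rotated])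
  hence "p dvd x ^ gcd n (m mod n) - 1" using step.IH step.prems(2) by simp
  thus ?case using step.hyps by (simp add: gcd_non_0_nat)
qed simp

lemma finite_degree_le: "finite {p :: 'a::{zero,finite} poly. degree p \<le> n}"
proof -
  have "{p :: 'a poly. degree p \<le> n} \<subseteq> Poly ` {xs. set xs \<subseteq> UNIV \<and> length xs \<le> Suc n}"
  proof
    fix p :: "'a poly" assume "p \<in> {p. degree p \<le> n}"
    hence "Poly (map (coeff p) [0..<Suc n]) = p"
      by (intro poly_eqI) (auto simp del: upt_Suc simp: nth_default_def coeff_eq_0 nth_map_upt)
    moreover have "map (coeff p) [0..<Suc n] \<in> {xs. set xs \<subseteq> UNIV \<and> length xs \<le> Suc n}" by simp
    ultimately show "p \<in> Poly ` {xs. set xs \<subseteq> UNIV \<and> length xs \<le> Suc n}"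
      by (metis image_eqI)
  qed
  thus ?thesis by (rule finite_subset) (intro finite_imageI finite_lists_length_le finite_UNIV)
qed

text \<open>The residues of the powers of \<open>T\<close> modulo \<open>Q\<close> repeat, and \<open>T\<close> can be cancelled since it is
  prime to \<open>Q\<close>.\<close>
lemma dvd_X_power_minus_one:
  assumes "Q \<noteq> 0" "\<not> [:0, 1:] dvd (Q :: 'a::{field,finite} poly)"
  shows "\<exists>d>0. Q dvd [:0, 1:] ^ d - 1"
proof -
  let ?r = "\<lambda>i::nat. [:0, 1::'a:] ^ i mod Q"
  have "degree (?r i) \<le> degree Q" for i
    using assms(1) degree_mod_less'[of Q "[:0, 1:] ^ i"] by (cases "?r i = 0") auto
  hence "range ?r \<subseteq> {p. degree p \<le> degree Q}" by auto
  hence "\<not> inj ?r" using finite_degree_le finite_subset finite_imageD infinite_UNIV_nat by blast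
  then obtain i j where ij: "i < j" "?r i = ?r j"
    unfolding inj_def by (metis linorder_neqE_nat)
  hence "Q dvd [:0, 1:] ^ j - [:0, 1:] ^ i" by (metis mod_eq_dvd_iff)
  moreover have "[:0, 1:] ^ j - [:0, 1:] ^ i = [:0, 1::'a:] ^ i * ([:0, 1:] ^ (j - i) - 1)"
    using ij(1) by (simp add: algebra_simps flip: power_add)
  ultimately have "Q dvd ([:0, 1:] ^ (j - i) - 1) * [:0, 1:] ^ i" by (simp add: mult.commute)
  hence "Q dvd [:0, 1:] ^ (j - i) - 1" using coprime_X_power[OF assms(2)] coprime_dvd_mult_cancel by blast
  thus ?thesis using ij(1) by (intro exI[of _ "j - i"]) simp
qed

lemma rf_dvd_Tpow_diff:
  assumes "\<not> [:0, 1:] dvd (Q :: 'a::field poly)" "Q dvd [:0, 1:] ^ d - 1" "int d dvd b - a"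
  shows "rf_dvd Q (Tpow a - Tpow b)"
proof -
  define t where "t = nat \<bar>a\<bar> + nat \<bar>b\<bar>"
  have ta: "a + int t \<ge> 0" and tb: "b + int t \<ge> 0" unfolding t_def by linarith+
  have "(Tpow a - Tpow b) * rf_of_poly ([:0, 1:] ^ t)
      = rf_of_poly ([:0, 1::'a:] ^ nat (a + int t) - [:0, 1:] ^ nat (b + int t))"
    by (simp add: left_diff_distrib Tpow_mult_X_power[OF ta] Tpow_mult_X_power[OF tb] rf_of_poly_diff)
  moreover have "int d dvd (a + int t) - (b + int t)"
    using assms(3) dvd_minus_iff[of "int d" "b - a"] by simp
  hence "int (nat (a + int t) mod d) = int (nat (b + int t) mod d)"
    using ta tb by (simp add: zmod_int mod_eq_dvd_iff)
  hence "nat (a + int t) mod d = nat (b + int t) mod d" by simp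
  hence "Q dvd [:0, 1::'a:] ^ nat (a + int t) - [:0, 1:] ^ nat (b + int t)"
    by (rule dvd_trans[OF assms(2) power_minus_one_dvd_power_diff])
  ultimately show ?thesis using coprime_X_power[OF assms(1)] by (intro rf_dvdI) auto
qed

section \<open>The auxiliary modulus\<close>

definition geom_X_sum :: "nat \<Rightarrow> nat \<Rightarrow> 'a::comm_ring_1 poly" where
  "geom_X_sum N l = (\<Sum>i<l. [:0, 1:] ^ (N * i))"

lemma geom_X_sum_mult: "geom_X_sum N l * ([:0, 1:] ^ N - 1) = [:0, 1::'a::comm_ring_1:] ^ (N * l) - 1"
  unfolding geom_X_sum_def power_mult using power_diff_1_eq[of "[:0, 1::'a:] ^ N" l]
  by (metis mult.commute)

lemma poly_geom_X_sum_0: "N > 0 \<Longrightarrow> l > 0 \<Longrightarrow> poly (geom_X_sum N l) 0 = (1::'a::comm_ring_1)"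
  by (cases l) (simp_all add: geom_X_sum_def poly_sum sum.lessThan_Suc_shift power_0_left)

lemma geom_X_sum_nonzero: "N > 0 \<Longrightarrow> l > 0 \<Longrightarrow> geom_X_sum N l \<noteq> (0::'a::comm_ring_1 poly)"
  by (metis poly_0 poly_geom_X_sum_0 zero_neq_one)

lemma X_dvd_geom_X_sum_minus_1:
  "N > 0 \<Longrightarrow> l > 0 \<Longrightarrow> [:0, 1:] dvd geom_X_sum N l - (1::'a::comm_ring_1 poly)"
  by (simp add: dvd_iff_poly_eq_0 poly_geom_X_sum_0)

lemma dvd_geom_X_sum_minus_of_nat:
  assumes "p dvd [:0, 1:] ^ N - 1"
  shows "p dvd geom_X_sum N l - of_nat l"
proof -
  have "geom_X_sum N l - of_nat l = (\<Sum>i<l. ([:0, 1::'a::comm_ring_1:] ^ N) ^ i - 1)"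
    by (simp add: geom_X_sum_def sum_subtractf power_mult)
  also have "p dvd \<dots>"
    using assms power_diff_1_eq[of "[:0, 1::'a:] ^ N"] by (intro dvd_sum) (metis dvd_mult2)
  finally show ?thesis .
qed

lemma not_dvd_if_dvd_minus_1:
  fixes p a :: "'a::comm_ring_1"
  assumes "\<not> p dvd 1" "p dvd a - 1"
  shows "\<not> p dvd a"
proof
  assume "p dvd a"
  hence "p dvd a - (a - 1)" using assms(2) by (rule dvd_diff)
  thus False using assms(1) by simp
qed

text \<open>If \<open>l \<equiv> 1\<close> modulo the characteristic and modulo the order \<open>d\<close> of \<open>T\<close> modulo \<open>p\<close>, then
  \<open>T\<^sup>N \<equiv> 1\<close> modulo any common factor of \<open>T\<^sup>N\<^sup>l - 1\<close> and \<open>T\<^sup>N\<^sup>d - 1\<close>, so the sum is \<open>\<equiv> l \<equiv> 1\<close> there.\<close>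
lemma not_dvd_geom_X_sum:
  fixes p :: "'a::field poly"
  assumes "\<not> is_unit p" "N > 0" "l > 0"
    and "p dvd [:0, 1:] ^ d - 1" "d dvd l - 1" "CHAR('a) dvd l - 1"
  shows "\<not> p dvd geom_X_sum N l"
proof
  assume dvd_geom: "p dvd geom_X_sum N l"
  have "p dvd [:0, 1:] ^ (N * d) - [:0, 1:] ^ 0"
    by (rule dvd_trans[OF assms(4) power_minus_one_dvd_power_diff]) simp
  hence "p dvd [:0, 1:] ^ (N * d) - 1" by simp
  moreover have "p dvd [:0, 1:] ^ (N * l) - 1"
    using dvd_mult2[OF dvd_geom, of "[:0, 1:] ^ N - 1"] by (simp only: geom_X_sum_mult)
  moreover have "gcd d l dvd l - (l - 1)"
    using assms(5) by (meson dvd_diff_nat dvd_trans gcd_dvd1 gcd_dvd2)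
  hence "gcd d l = 1" using assms(3) by simp
  hence "gcd (N * d) (N * l) = N" by (simp add: gcd_mult_distrib_nat[symmetric])
  ultimately have "p dvd [:0, 1:] ^ N - 1" using dvd_power_minus_one_gcd by metis
  hence "p dvd geom_X_sum N l - of_nat l" by (rule dvd_geom_X_sum_minus_of_nat)
  moreover have "(of_nat l :: 'a poly) = 1"
    using assms(3,6) by (simp add: of_nat_eq_0_iff_char_dvd[symmetric] of_nat_diff of_nat_poly)
  ultimately have "p dvd geom_X_sum N l - 1" by simp
  thus False using not_dvd_if_dvd_minus_1[OF assms(1)] dvd_geom by blast
qed

lemma exists_geom_X_sum_avoiding:
  fixes S :: "'a::{field,finite} poly set"
  assumes "finite S" "\<forall>\<pi>\<in>S. irreducible \<pi>" "N > 0"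
  shows "\<exists>l>K. \<forall>\<pi>\<in>S. \<not> \<pi> dvd geom_X_sum N l"
proof -
  define S' where "S' = {\<pi>\<in>S. \<not> \<pi> dvd [:0, 1:]}"
  have "\<forall>\<pi>\<in>S'. \<exists>d>0. \<pi> dvd [:0, 1:] ^ d - 1"
  proof
    fix \<pi> assume "\<pi> \<in> S'"
    hence "\<pi> \<noteq> 0" using assms(2) unfolding S'_def irreducible_def by auto
    moreover have "\<not> [:0, 1:] dvd \<pi>"
      using \<open>\<pi> \<in> S'\<close> assms(2) irreducibleD'[of \<pi> "[:0, 1::'a:]"] unfolding S'_def
      by (auto simp: is_unit_poly_iff)
    ultimately show "\<exists>d>0. \<pi> dvd [:0, 1:] ^ d - 1" by (rule dvd_X_power_minus_one)
  qed
  then obtain ord where ord: "\<forall>\<pi>\<in>S'. ord \<pi> > 0 \<and> \<pi> dvd [:0, 1:] ^ ord \<pi> - 1" by metis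
  define P where "P = CHAR('a) * (\<Prod>\<pi>\<in>S'. ord \<pi>)"
  have "finite S'" using assms(1) unfolding S'_def by simp
  hence "P > 0" and ord_dvd: "\<forall>\<pi>\<in>S'. ord \<pi> dvd P"
    unfolding P_def using ord finite_imp_CHAR_pos[where 'a='a] by (auto simp: prod_pos dvd_prodI)
  define l where "l = 1 + K * P"
  have "l > K" "l > 0" unfolding l_def using \<open>P > 0\<close> by (simp_all add: less_Suc_eq_le)
  moreover have "\<not> \<pi> dvd geom_X_sum N l" if "\<pi> \<in> S" for \<pi>
  proof (cases "\<pi> dvd [:0, 1:]")
    case True
    have "\<not> is_unit \<pi>" using assms(2) that by (simp add: irreducible_def)
    moreover have "\<pi> dvd geom_X_sum N l - 1"
      using X_dvd_geom_X_sum_minus_1[OF assms(3) \<open>l > 0\<close>] by (rule dvd_trans[OF True])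
    ultimately show ?thesis by (rule not_dvd_if_dvd_minus_1)
  next
    case False
    hence "\<pi> \<in> S'" using that unfolding S'_def by simp
    show ?thesis
    proof (rule not_dvd_geom_X_sum[OF _ assms(3) \<open>l > 0\<close>])
      show "\<not> is_unit \<pi>" using assms(2) that by (simp add: irreducible_def)
      show "\<pi> dvd [:0, 1:] ^ ord \<pi> - 1" using ord \<open>\<pi> \<in> S'\<close> by blast
      show "ord \<pi> dvd l - 1" "CHAR('a) dvd l - 1"
        using ord_dvd \<open>\<pi> \<in> S'\<close> unfolding l_def P_def by auto
    qed
  qed
  ultimately show ?thesis by blast
qed

section \<open>Rotations and linked windows\<close>

lemma inj_on_add_mod: "inj_on (\<lambda>u. (b + u) mod W) {..<W :: nat}"
proof -
  have "x = y" if "x < W" "y < W" "x \<le> y" "(b + x) mod W = (b + y) mod W" for x y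
  proof -
    have "W dvd y - x" using that mod_eq_dvd_iff_nat[of "b + x" "b + y" W] by simp
    thus "x = y" using that by (cases "y - x = 0") (auto dest: dvd_imp_le)
  qed
  thus ?thesis by (intro inj_onI) (metis lessThan_iff nat_le_linear)
qed

lemma exists_shift_without_wraparound:
  fixes b :: "'k \<Rightarrow> nat"
  assumes "finite K" "card K * E < W"
  shows "\<exists>u. \<forall>k\<in>K. (b k + u) mod W + E \<le> W"
proof -
  define bad where "bad k = {u \<in> {..<W}. W < (b k + u) mod W + E}" for k
  have "card (bad k) \<le> E" for k
  proof -
    have "card (bad k) = card ((\<lambda>u. (b k + u) mod W) ` bad k)"
      by (intro card_image[symmetric] inj_on_subset[OF inj_on_add_mod]) (auto simp: bad_def)
    also have "\<dots> \<le> card {W - E..<W}"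
      unfolding bad_def using assms(2) by (intro card_mono) auto
    finally show ?thesis by simp
  qed
  hence "card (\<Union>k\<in>K. bad k) \<le> card K * E"
    using card_UN_le[OF assms(1), of bad] sum_bounded_above[of K "\<lambda>k. card (bad k)" E] by simp
  hence "\<not> {..<W} \<subseteq> (\<Union>k\<in>K. bad k)"
    using assms card_mono[of "\<Union>k\<in>K. bad k" "{..<W}"] unfolding bad_def by fastforce
  then obtain u where "u < W" "\<forall>k\<in>K. u \<notin> bad k" by blast
  thus ?thesis unfolding bad_def by (auto simp: not_less)
qed

lemma degree_X_power_minus_1:
  assumes "W > 0"
  shows "degree ([:0, 1::'a::field:] ^ W - 1) = W"
proof (rule antisym)
  show "degree ([:0, 1::'a:] ^ W - 1) \<le> W"
    using degree_diff_le[of "[:0, 1::'a:] ^ W" W 1] by (simp add: degree_power_eq)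
  have "coeff ([:0, 1::'a:] ^ W - 1) W = 1" using assms by (simp add: coeff_linear_power)
  thus "W \<le> degree ([:0, 1::'a:] ^ W - 1)" by (intro le_degree) simp
qed

text \<open>Multiplying by \<open>T\<^sup>u\<close> and reducing exponents modulo \<open>W\<close> does not change a polynomial modulo
  \<open>T\<^sup>W - 1\<close>; for a suitable \<open>u\<close> the reduced product has degree below \<open>W\<close> and must vanish.\<close>
lemma exists_rotation_eq_0:
  fixes c :: "'k \<Rightarrow> 'a::field poly" and b :: "'k \<Rightarrow> nat"
  assumes "finite K" "H \<noteq> 0" "\<forall>k\<in>K. degree (c k) < D" "card K * (D + degree H) < W"
    and "([:0, 1:] ^ W - 1) dvd (\<Sum>k\<in>K. c k * [:0, 1:] ^ b k) * H"
  shows "\<exists>u. (\<Sum>k\<in>K. c k * [:0, 1:] ^ ((b k + u) mod W)) = 0"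
proof -
  obtain u where u: "\<forall>k\<in>K. (b k + u) mod W + (D + degree H) \<le> W"
    using exists_shift_without_wraparound[OF assms(1,4)] by blast
  define R where "R = (\<Sum>k\<in>K. c k * [:0, 1::'a:] ^ ((b k + u) mod W))"
  have "W > 0" using assms(4) by simp
  have "degree (R * H) < W"
  proof -
    have "degree (c k * [:0, 1::'a:] ^ ((b k + u) mod W) * H) < W" if "k \<in> K" for k
    proof -
      have "degree (c k * [:0, 1::'a:] ^ ((b k + u) mod W) * H) \<le> degree (c k) + (b k + u) mod W + degree H"
        using degree_mult_le[of "c k * [:0, 1::'a:] ^ ((b k + u) mod W)" H]
          degree_mult_le[of "c k" "[:0, 1::'a:] ^ ((b k + u) mod W)"] by (simp add: degree_linear_power)
      moreover have "degree (c k) < D" "(b k + u) mod W + (D + degree H) \<le> W" using assms(3) u that by auto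
      ultimately show ?thesis by linarith
    qed
    thus ?thesis unfolding R_def sum_distrib_right using \<open>W > 0\<close> by (intro degree_sum_less) auto
  qed
  let ?t = "[:0, 1:] ^ u * ((\<Sum>k\<in>K. c k * [:0, 1:] ^ b k) * H)"
  have "R * H - ?t = (\<Sum>k\<in>K. c k * H * ([:0, 1:] ^ ((b k + u) mod W) - [:0, 1:] ^ (b k + u)))"
    unfolding R_def by (simp add: sum_distrib_right sum_distrib_left sum_subtractf algebra_simps power_add)
  also have "([:0, 1::'a:] ^ W - 1) dvd \<dots>"
    by (intro dvd_sum dvd_mult power_minus_one_dvd_power_diff) simp
  finally have "([:0, 1::'a:] ^ W - 1) dvd (R * H - ?t) + ?t"
    by (rule dvd_add[OF _ dvd_mult[OF assms(5)]])
  hence "([:0, 1::'a:] ^ W - 1) dvd R * H" by simp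
  have "R * H = 0"
  proof (rule ccontr)
    assume "R * H \<noteq> 0"
    hence "degree ([:0, 1::'a:] ^ W - 1) \<le> degree (R * H)"
      using \<open>([:0, 1::'a:] ^ W - 1) dvd R * H\<close> by (rule dvd_imp_degree_le[rotated])
    thus False using \<open>degree (R * H) < W\<close> degree_X_power_minus_1[OF \<open>W > 0\<close>, where 'a='a] by linarith
  qed
  thus ?thesis using assms(2) unfolding R_def by auto
qed

definition linked :: "'k set \<Rightarrow> ('k \<Rightarrow> nat) \<Rightarrow> nat \<Rightarrow> 'k \<Rightarrow> 'k \<Rightarrow> bool" where
  "linked K b D k k' \<longleftrightarrow> {min (b k) (b k')..max (b k) (b k')} \<subseteq> (\<Union>i\<in>K. {b i..<b i + D})"

lemma linked_if_windows_overlap: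
  assumes "k \<in> K" "k' \<in> K" "b k \<le> i" "i < b k + D" "b k' \<le> i" "i < b k' + D"
  shows "linked K b D k k'"
  unfolding linked_def
proof
  fix x assume "x \<in> {min (b k) (b k')..max (b k) (b k')}"
  hence "x \<in> {b k..<b k + D} \<or> x \<in> {b k'..<b k' + D}" using assms(3-6) by auto
  thus "x \<in> (\<Union>i\<in>K. {b i..<b i + D})" using assms(1,2) by blast
qed

lemma linked_distance_less:
  assumes "finite K" "linked K b D k k'"
  shows "\<bar>int (b k) - int (b k')\<bar> < int (card K * D)"
proof -
  have "card {min (b k) (b k')..max (b k) (b k')} \<le> card (\<Union>i\<in>K. {b i..<b i + D})"
    using assms unfolding linked_def by (intro card_mono) auto
  also have "\<dots> \<le> card K * D"
    using card_UN_le[OF assms(1), of "\<lambda>i. {b i..<b i + D}"] by simp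
  finally have "Suc (max (b k) (b k')) - min (b k) (b k') \<le> card K * D" by simp
  hence "max (b k) (b k') - min (b k) (b k') < card K * D" by linarith
  moreover have "\<bar>int (b k) - int (b k')\<bar> = int (max (b k) (b k') - min (b k) (b k'))"
    by (cases "b k \<le> b k'") (simp_all add: max_def min_def of_nat_diff)
  ultimately show ?thesis by (metis of_nat_less_iff)
qed

text \<open>Terms whose windows are not linked cannot cancel each other, so a vanishing sum of
  polynomials supported in the windows \<open>[b k, b k + D)\<close> vanishes on every linked class; the class
  sums may therefore be multiplied by different powers of \<open>T\<close>.\<close>
lemma sum_Tpow_eq_0_if_linked:
  fixes p :: "'k \<Rightarrow> 'a::field poly" and g :: "'k \<Rightarrow> int"
  assumes "finite K" "\<forall>k\<in>K. \<forall>i. coeff (p k) i \<noteq> 0 \<longrightarrow> b k \<le> i \<and> i < b k + D"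
    and "(\<Sum>k\<in>K. p k) = 0"
    and "\<forall>k\<in>K. \<forall>k'\<in>K. linked K b D k k' \<longrightarrow> g k = g k'"
  shows "(\<Sum>k\<in>K. rf_of_poly (p k) * Tpow (g k)) = 0"
proof -
  have class_sum: "(\<Sum>k | k \<in> K \<and> g k = \<gamma>. p k) = 0" for \<gamma>
  proof (rule poly_eqI)
    fix i
    let ?C = "{k \<in> K. g k = \<gamma>}"
    show "coeff (\<Sum>k\<in>?C. p k) i = coeff 0 i"
    proof (cases "\<exists>k0\<in>?C. b k0 \<le> i \<and> i < b k0 + D")
      case True
      then obtain k0 where k0: "k0 \<in> ?C" "b k0 \<le> i" "i < b k0 + D" by blast
      have "coeff (p k) i = 0" if "k \<in> K - ?C" for k
      proof (rule ccontr)
        assume "coeff (p k) i \<noteq> 0"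
        hence "b k \<le> i" "i < b k + D" using assms(2) that by auto
        hence "linked K b D k0 k" using k0 that by (intro linked_if_windows_overlap) auto
        hence "g k0 = g k" using assms(4) k0(1) that by blast
        thus False using k0(1) that by simp
      qed
      hence "(\<Sum>k\<in>?C. coeff (p k) i) = (\<Sum>k\<in>K. coeff (p k) i)"
        using assms(1) by (intro sum.mono_neutral_left) auto
      also have "\<dots> = 0" using assms(3) by (simp flip: coeff_sum)
      finally show ?thesis by (simp add: coeff_sum)
    next
      case False
      thus ?thesis using assms(2) by (auto simp: coeff_sum intro!: sum.neutral)
    qed
  qed
  have "(\<Sum>k\<in>K. rf_of_poly (p k) * Tpow (g k))
      = (\<Sum>\<gamma>\<in>g ` K. \<Sum>k | k \<in> K \<and> g k = \<gamma>. rf_of_poly (p k) * Tpow (g k))"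
    by (rule sum.image_gen[OF assms(1)])
  also have "\<dots> = (\<Sum>\<gamma>\<in>g ` K. rf_of_poly (\<Sum>k | k \<in> K \<and> g k = \<gamma>. p k) * Tpow \<gamma>)"
    by (intro sum.cong refl) (simp add: rf_of_poly_sum sum_distrib_right)
  also have "\<dots> = 0" using class_sum by (simp add: rf_of_poly_0)
  finally show ?thesis .
qed

section \<open>Generalized inverses of integer matrices\<close>

definition outer :: "'a::comm_ring_1 vec \<Rightarrow> 'a vec \<Rightarrow> 'a mat" where
  "outer u w = mat (dim_vec u) (dim_vec w) (\<lambda>(i, j). u $ i * w $ j)"

lemma outer_carrier [simp]: "outer u w \<in> carrier_mat (dim_vec u) (dim_vec w)"
  and outer_dim [simp]: "dim_row (outer u w) = dim_vec u" "dim_col (outer u w) = dim_vec w"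
  and outer_index [simp]: "i < dim_vec u \<Longrightarrow> j < dim_vec w \<Longrightarrow> outer u w $$ (i, j) = u $ i * w $ j"
  unfolding outer_def by simp_all

lemma mult_outer_left:
  assumes "A \<in> carrier_mat r n" "dim_vec x = n"
  shows "A * outer x y = outer (A *\<^sub>v x) y"
proof (rule eq_matI)
  fix i j assume ij: "i < dim_row (outer (A *\<^sub>v x) y)" "j < dim_col (outer (A *\<^sub>v x) y)"
  have "(A * outer x y) $$ (i, j) = (\<Sum>k = 0..<n. A $$ (i, k) * (x $ k * y $ j))"
    using ij assms by (simp add: scalar_prod_def)
  also have "\<dots> = (\<Sum>k = 0..<n. A $$ (i, k) * x $ k) * y $ j"
    by (simp add: sum_distrib_right mult.assoc)
  also have "\<dots> = outer (A *\<^sub>v x) y $$ (i, j)" using ij assms by (simp add: scalar_prod_def)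
  finally show "(A * outer x y) $$ (i, j) = outer (A *\<^sub>v x) y $$ (i, j)" .
qed (use assms in auto)

lemma mult_outer_right:
  assumes "B \<in> carrier_mat n c" "dim_vec y = n"
  shows "outer x y * B = outer x (transpose_mat B *\<^sub>v y)"
proof (rule eq_matI)
  fix i j assume ij: "i < dim_row (outer x (transpose_mat B *\<^sub>v y))" "j < dim_col (outer x (transpose_mat B *\<^sub>v y))"
  have "(outer x y * B) $$ (i, j) = (\<Sum>k = 0..<n. (x $ i * y $ k) * B $$ (k, j))"
    using ij assms by (simp add: scalar_prod_def)
  also have "\<dots> = x $ i * (\<Sum>k = 0..<n. B $$ (k, j) * y $ k)"
    by (simp add: sum_distrib_left mult.assoc mult.commute mult.left_commute)
  also have "\<dots> = outer x (transpose_mat B *\<^sub>v y) $$ (i, j)" using ij assms by (simp add: scalar_prod_def)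
  finally show "(outer x y * B) $$ (i, j) = outer x (transpose_mat B *\<^sub>v y) $$ (i, j)" .
qed (use assms in auto)

lemma mult_unit_vec:
  fixes A :: "'a::comm_ring_1 mat"
  assumes "A \<in> carrier_mat r n" "j < n"
  shows "A *\<^sub>v unit_vec n j = col A j"
  using assms by (intro eq_vecI) auto

lemma transpose_mult_unit_vec:
  fixes A :: "'a::comm_ring_1 mat"
  assumes "A \<in> carrier_mat r n" "i < r"
  shows "transpose_mat A *\<^sub>v unit_vec r i = row A i"
  using mult_unit_vec[of "transpose_mat A" n r i] assms by simp

definition pivot_eliminate :: "'a::comm_ring_1 mat \<Rightarrow> nat \<Rightarrow> nat \<Rightarrow> 'a mat" where
  "pivot_eliminate A i0 j0 = A $$ (i0, j0) \<cdot>\<^sub>m A - outer (col A j0) (row A i0)"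

lemma pivot_eliminate_dim [simp]:
  "dim_row (pivot_eliminate A i0 j0) = dim_row A" "dim_col (pivot_eliminate A i0 j0) = dim_col A"
  unfolding pivot_eliminate_def by simp_all

lemma pivot_eliminate_carrier:
  "A \<in> carrier_mat r M \<Longrightarrow> pivot_eliminate A i0 j0 \<in> carrier_mat r M"
  by (intro carrier_matI) auto

lemma pivot_eliminate_index:
  assumes "A \<in> carrier_mat r M" "i < r" "j < M" "i0 < r" "j0 < M"
  shows "pivot_eliminate A i0 j0 $$ (i, j) = A $$ (i0, j0) * A $$ (i, j) - A $$ (i, j0) * A $$ (i0, j)"
  using assms unfolding pivot_eliminate_def by simp

lemma mult_pivot_eliminate_right:
  assumes "A \<in> carrier_mat r M" "i0 < r" "j0 < M"
  shows "A * (A $$ (i0, j0) \<cdot>\<^sub>m 1\<^sub>m M - outer (unit_vec M j0) (row A i0)) = pivot_eliminate A i0 j0"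
proof -
  have "A * (A $$ (i0, j0) \<cdot>\<^sub>m 1\<^sub>m M - outer (unit_vec M j0) (row A i0))
      = A * (A $$ (i0, j0) \<cdot>\<^sub>m 1\<^sub>m M) - A * outer (unit_vec M j0) (row A i0)"
    using assms by (intro mult_minus_distrib_mat) auto
  moreover have "A * (A $$ (i0, j0) \<cdot>\<^sub>m 1\<^sub>m M) = A $$ (i0, j0) \<cdot>\<^sub>m A"
    using mult_smult_distrib[OF assms(1) one_carrier_mat] assms(1) by simp
  ultimately show ?thesis
    using assms by (simp add: pivot_eliminate_def mult_outer_left mult_unit_vec)
qed

lemma mult_pivot_eliminate_left:
  assumes "A \<in> carrier_mat r M" "i0 < r" "j0 < M"
  shows "(A $$ (i0, j0) \<cdot>\<^sub>m 1\<^sub>m r - outer (col A j0) (unit_vec r i0)) * A = pivot_eliminate A i0 j0"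
proof -
  have "(A $$ (i0, j0) \<cdot>\<^sub>m 1\<^sub>m r - outer (col A j0) (unit_vec r i0)) * A
      = (A $$ (i0, j0) \<cdot>\<^sub>m 1\<^sub>m r) * A - outer (col A j0) (unit_vec r i0) * A"
    using assms by (intro minus_mult_distrib_mat) auto
  thus ?thesis
    using assms by (simp add: pivot_eliminate_def mult_outer_right transpose_mult_unit_vec
        mult_smult_assoc_mat[of _ r r])
qed

lemma mult_outer_unit_vec_mult:
  assumes "A \<in> carrier_mat r M" "i0 < r" "j0 < M"
  shows "A * outer (unit_vec M j0) (unit_vec r i0) * A = outer (col A j0) (row A i0)"
  using assms by (simp add: mult_outer_left mult_outer_right mult_unit_vec transpose_mult_unit_vec)

lemma generalized_inverse_pivot_eliminate:
  fixes A :: "'a::comm_ring_1 mat"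
  assumes A: "A \<in> carrier_mat r M" "i0 < r" "j0 < M"
    and G': "G' \<in> carrier_mat M r"
    "pivot_eliminate A i0 j0 * G' * pivot_eliminate A i0 j0 = c \<cdot>\<^sub>m pivot_eliminate A i0 j0"
  shows "\<exists>G \<in> carrier_mat M r. A * G * A = (c * A $$ (i0, j0)) \<cdot>\<^sub>m A"
proof -
  let ?E = "pivot_eliminate A i0 j0" and ?a = "A $$ (i0, j0)"
  define P where "P = ?a \<cdot>\<^sub>m 1\<^sub>m M - outer (unit_vec M j0) (row A i0)"
  define P' where "P' = ?a \<cdot>\<^sub>m 1\<^sub>m r - outer (col A j0) (unit_vec r i0)"
  define U :: "'a mat" where "U = outer (unit_vec M j0) (unit_vec r i0)"
  have carrier: "P \<in> carrier_mat M M" "P' \<in> carrier_mat r r" "U \<in> carrier_mat M r"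
    using A unfolding P_def P'_def U_def by auto
  define G where "G = P * G' * P' + c \<cdot>\<^sub>m U"
  have "A * G * A = (A * (P * G' * P') + A * (c \<cdot>\<^sub>m U)) * A"
    unfolding G_def using A G' carrier by (subst mult_add_distrib_mat) auto
  also have "\<dots> = A * (P * G' * P') * A + A * (c \<cdot>\<^sub>m U) * A"
    using A G' carrier by (intro add_mult_distrib_mat) auto
  also have "A * (c \<cdot>\<^sub>m U) * A = c \<cdot>\<^sub>m (A * U * A)"
    using A carrier by (simp add: mult_smult_distrib mult_smult_assoc_mat[of _ r r])
  also have "A * (P * G' * P') * A = (A * P) * G' * (P' * A)"
  proof -
    have "A * (P * G' * P') = A * (P * G') * P'" using A G' carrier by (intro assoc_mult_mat[symmetric]) auto
    also have "A * (P * G') = A * P * G'" using A G' carrier by (intro assoc_mult_mat[symmetric]) auto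
    finally have "A * (P * G' * P') * A = A * P * G' * P' * A" by simp
    also have "\<dots> = A * P * G' * (P' * A)" using A G' carrier by (intro assoc_mult_mat) auto
    finally show ?thesis .
  qed
  also have "\<dots> = c \<cdot>\<^sub>m ?E"
    unfolding P_def P'_def using A G' by (simp add: mult_pivot_eliminate_right mult_pivot_eliminate_left)
  also have "A * U * A = outer (col A j0) (row A i0)"
    unfolding U_def using A by (rule mult_outer_unit_vec_mult)
  also have "c \<cdot>\<^sub>m ?E + c \<cdot>\<^sub>m outer (col A j0) (row A i0) = (c * ?a) \<cdot>\<^sub>m A"
  proof (rule eq_matI)
    fix i j assume "i < dim_row ((c * ?a) \<cdot>\<^sub>m A)" "j < dim_col ((c * ?a) \<cdot>\<^sub>m A)"
    thus "(c \<cdot>\<^sub>m ?E + c \<cdot>\<^sub>m outer (col A j0) (row A i0)) $$ (i, j) = ((c * ?a) \<cdot>\<^sub>m A) $$ (i, j)"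
      using A by (simp add: pivot_eliminate_index algebra_simps)
  qed (use A in simp_all)
  finally have "A * G * A = (c * ?a) \<cdot>\<^sub>m A" .
  moreover have "G \<in> carrier_mat M r" unfolding G_def using G'(1) carrier by auto
  ultimately show ?thesis by blast
qed

definition nonzero_rows :: "'a::zero mat \<Rightarrow> nat set" where
  "nonzero_rows A = {i. i < dim_row A \<and> (\<exists>j<dim_col A. A $$ (i, j) \<noteq> 0)}"

lemma nonzero_rows_pivot_eliminate:
  fixes A :: "'a::idom mat"
  assumes "A \<in> carrier_mat r M" "i0 < r" "j0 < M" "A $$ (i0, j0) \<noteq> 0"
  shows "nonzero_rows (pivot_eliminate A i0 j0) \<subset> nonzero_rows A"
proof -
  have "nonzero_rows (pivot_eliminate A i0 j0) \<subseteq> nonzero_rows A"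
  proof
    fix i assume "i \<in> nonzero_rows (pivot_eliminate A i0 j0)"
    then obtain j where ij: "i < r" "j < M" "pivot_eliminate A i0 j0 $$ (i, j) \<noteq> 0"
      using assms(1) unfolding nonzero_rows_def by auto
    hence "A $$ (i, j) \<noteq> 0 \<or> A $$ (i, j0) \<noteq> 0"
      using pivot_eliminate_index[OF assms(1) _ _ assms(2,3)] by auto
    thus "i \<in> nonzero_rows A" using ij assms unfolding nonzero_rows_def by auto
  qed
  moreover have "i0 \<notin> nonzero_rows (pivot_eliminate A i0 j0)" "i0 \<in> nonzero_rows A"
    using assms pivot_eliminate_index[OF assms(1) _ _ assms(2,3)] unfolding nonzero_rows_def by auto
  ultimately show ?thesis by blast
qed

lemma exists_generalized_inverse:
  fixes A :: "'a::idom mat"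
  assumes "A \<in> carrier_mat r M"
  shows "\<exists>G c. G \<in> carrier_mat M r \<and> c \<noteq> 0 \<and> A * G * A = c \<cdot>\<^sub>m A"
  using assms
proof (induction "card (nonzero_rows A)" arbitrary: A rule: less_induct)
  case less
  show ?case
  proof (cases "nonzero_rows A = {}")
    case True
    hence "A = 0\<^sub>m r M" using less.prems by (intro eq_matI) (auto simp: nonzero_rows_def)
    thus ?thesis by (intro exI[of _ "0\<^sub>m M r"] exI[of _ 1]) simp
  next
    case False
    then obtain i0 j0 where ij0: "i0 < r" "j0 < M" "A $$ (i0, j0) \<noteq> 0"
      using less.prems unfolding nonzero_rows_def by auto
    have "card (nonzero_rows (pivot_eliminate A i0 j0)) < card (nonzero_rows A)"
      using nonzero_rows_pivot_eliminate[OF less.prems ij0] by (intro psubset_card_mono) (auto simp: nonzero_rows_def)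
    then obtain G' c where G': "G' \<in> carrier_mat M r" "c \<noteq> 0"
      "pivot_eliminate A i0 j0 * G' * pivot_eliminate A i0 j0 = c \<cdot>\<^sub>m pivot_eliminate A i0 j0"
      using less.hyps pivot_eliminate_carrier[OF less.prems] by blast
    then obtain G where "G \<in> carrier_mat M r" "A * G * A = (c * A $$ (i0, j0)) \<cdot>\<^sub>m A"
      using generalized_inverse_pivot_eliminate[OF less.prems ij0(1,2)] by blast
    moreover have "c * A $$ (i0, j0) \<noteq> 0" using G'(2) ij0(3) by simp
    ultimately show ?thesis by blast
  qed
qed

lemma exists_int_generalized_inverse:
  fixes v :: "'k \<Rightarrow> nat \<Rightarrow> int"
  assumes "finite R"
  shows "\<exists>g c. c > 0 \<and> (\<forall>k\<in>R. \<forall>j<M. (\<Sum>l\<in>R. (\<Sum>i<M. v k i * g i l) * v l j) = c * v k j)"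
proof -
  define r where "r = card R"
  obtain h where h: "bij_betw h {..<r} R"
    using ex_bij_betw_nat_finite[OF assms] unfolding r_def atLeast0LessThan by blast
  define A where "A = mat r M (\<lambda>(k, i). v (h k) i)"
  have A: "A \<in> carrier_mat r M" unfolding A_def by simp
  obtain G c where G: "G \<in> carrier_mat M r" "c \<noteq> 0" "A * G * A = c \<cdot>\<^sub>m A"
    using exists_generalized_inverse[OF A] by blast
  define g where "g i l = sgn c * G $$ (i, inv_into {..<r} h l)" for i l
  have "(\<Sum>l\<in>R. (\<Sum>i<M. v k i * g i l) * v l j) = \<bar>c\<bar> * v k j" if "k \<in> R" "j < M" for k j
  proof -
    obtain k' where k': "k' < r" "k = h k'" using h \<open>k \<in> R\<close> by (auto simp: bij_betw_def)
    have "(\<Sum>l\<in>R. (\<Sum>i<M. v k i * g i l) * v l j) = (\<Sum>l<r. (\<Sum>i<M. v k i * g i (h l)) * v (h l) j)"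
      using sum.reindex_bij_betw[OF h, of "\<lambda>l. (\<Sum>i<M. v k i * g i l) * v l j"] by simp
    also have "\<dots> = sgn c * (\<Sum>l<r. (A * G) $$ (k', l) * A $$ (l, j))"
      using k' h A G(1) \<open>j < M\<close>
      by (simp add: g_def A_def scalar_prod_def sum_distrib_left sum_distrib_right algebra_simps
          bij_betw_inv_into_left atLeast0LessThan)
    also have "(\<Sum>l<r. (A * G) $$ (k', l) * A $$ (l, j)) = row (A * G) k' \<bullet> col A j"
      unfolding scalar_prod_def using k' A G(1) \<open>j < M\<close> by (intro sum.cong) auto
    also have "\<dots> = (A * G * A) $$ (k', j)"
      using k' A G(1) \<open>j < M\<close> by (intro index_mult_mat[symmetric]) auto
    also have "\<dots> = c * v k j" using G(3) k' A \<open>j < M\<close> by (simp add: A_def)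
    finally show ?thesis by (simp add: abs_sgn mult.assoc[symmetric] mult.commute[of "sgn c"])
  qed
  moreover have "\<bar>c\<bar> > 0" using G(2) by simp
  ultimately show ?thesis by blast
qed

section \<open>Lifting congruent solutions of integer systems\<close>

definition exact_lifting :: "('k \<Rightarrow> nat \<Rightarrow> int) \<Rightarrow> 'k set \<Rightarrow> nat \<Rightarrow> int \<Rightarrow> int \<Rightarrow> bool" where
  "exact_lifting v S M c B \<longleftrightarrow>
     (\<forall>x d L W D. c * L dvd W \<longrightarrow> B * (D + 1) < W \<longrightarrow> 0 \<le> D \<longrightarrow>
        (\<forall>k\<in>S. \<bar>d k\<bar> \<le> D \<and> W dvd (\<Sum>i<M. v k i * x i) - d k) \<longrightarrow>
        (\<exists>x'. (\<forall>k\<in>S. (\<Sum>i<M. v k i * x' i) = d k) \<and> (\<forall>i<M. L dvd x' i - x i)))"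

lemma exact_lifting_mono:
  assumes "exact_lifting v S M c B" "c dvd c'" "B \<le> B'"
  shows "exact_lifting v S M c' B'"
  unfolding exact_lifting_def
proof (intro allI impI)
  fix x d L W D :: _
  assume "c' * L dvd W" "B' * (D + 1) < W" "0 \<le> (D::int)"
    "\<forall>k\<in>S. \<bar>d k\<bar> \<le> D \<and> W dvd (\<Sum>i<M. v k i * x i) - d k"
  moreover have "c * L dvd W" using mult_dvd_mono[OF assms(2) dvd_refl] \<open>c' * L dvd W\<close> by (rule dvd_trans)
  moreover have "B * (D + 1) \<le> B' * (D + 1)" using assms(3) \<open>0 \<le> D\<close> by (intro mult_right_mono) auto
  hence "B * (D + 1) < W" using \<open>B' * (D + 1) < W\<close> by linarith
  ultimately show "\<exists>x'. (\<forall>k\<in>S. (\<Sum>i<M. v k i * x' i) = d k) \<and> (\<forall>i<M. L dvd x' i - x i)"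
    using assms(1) unfolding exact_lifting_def by blast
qed

lemma eq_0_if_dvd_abs_less:
  fixes W x :: int
  assumes "W dvd x" "\<bar>x\<bar> < W"
  shows "x = 0"
proof (rule ccontr)
  assume "x \<noteq> 0"
  hence "\<bar>W\<bar> \<le> \<bar>x\<bar>" using assms(1) by (rule dvd_imp_le_int)
  thus False using assms(2) by simp
qed

text \<open>Here \<open>h = V G\<close> satisfies \<open>h V = c V\<close>. For a solution \<open>x\<close> modulo \<open>W\<close> the residual
  \<open>w = V x - d\<close> is divisible by \<open>W\<close>; then \<open>h d = c d\<close>, as both sides agree modulo \<open>W\<close> and are
  small, and \<open>x' = x - G (w / c)\<close> is an exact solution.\<close>
lemma exact_lifting_if_generalized_inverse:
  fixes v :: "'k \<Rightarrow> nat \<Rightarrow> int" and g :: "nat \<Rightarrow> 'k \<Rightarrow> int" and M :: nat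
  defines "h k l \<equiv> \<Sum>i<M. v k i * g i l"
  assumes "finite S" "c > 0" and gen_inv: "\<forall>k\<in>S. \<forall>j<M. (\<Sum>l\<in>S. h k l * v l j) = c * v k j"
    and Bh: "\<forall>k\<in>S. \<forall>l\<in>S. \<bar>h k l\<bar> \<le> Bh" "Bh \<ge> 0"
  shows "exact_lifting v S M c (int (card S) * Bh + c + 1)"
  unfolding exact_lifting_def
proof (intro allI impI)
  fix x d L W D :: _
  assume cLW: "c * L dvd W" and BW: "(int (card S) * Bh + c + 1) * (D + 1) < W" and "0 \<le> (D::int)"
    and sol: "\<forall>k\<in>S. \<bar>d k\<bar> \<le> D \<and> W dvd (\<Sum>i<M. v k i * x i) - d k"
  have h_apply: "(\<Sum>l\<in>S. h k l * (\<Sum>i<M. v l i * y i)) = c * (\<Sum>i<M. v k i * y i)" if "k \<in> S" for k y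
  proof -
    have "(\<Sum>l\<in>S. h k l * (\<Sum>i<M. v l i * y i)) = (\<Sum>i<M. (\<Sum>l\<in>S. h k l * v l i) * y i)"
      unfolding sum_distrib_left sum_distrib_right mult.assoc by (rule sum.swap)
    thus ?thesis using gen_inv that by (simp add: sum_distrib_left mult.assoc)
  qed
  define w where "w k = (\<Sum>i<M. v k i * x i) - d k" for k
  have W_w: "W dvd w l" if "l \<in> S" for l using sol that unfolding w_def by blast
  have h_d: "(\<Sum>l\<in>S. h k l * d l) - c * d k = 0" if "k \<in> S" for k
  proof (rule eq_0_if_dvd_abs_less)
    have "(\<Sum>l\<in>S. h k l * d l) - c * d k = c * w k - (\<Sum>l\<in>S. h k l * w l)"
      using h_apply[OF that, of x] unfolding w_def by (simp add: algebra_simps sum_subtractf)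
    moreover have "W dvd c * w k - (\<Sum>l\<in>S. h k l * w l)"
      using W_w that by (intro dvd_diff dvd_sum dvd_mult) auto
    ultimately show "W dvd (\<Sum>l\<in>S. h k l * d l) - c * d k" by simp
    have "\<bar>h k l * d l\<bar> \<le> Bh * D" if "l \<in> S" for l
      unfolding abs_mult using Bh \<open>k \<in> S\<close> that sol by (intro mult_mono) auto
    hence "(\<Sum>l\<in>S. \<bar>h k l * d l\<bar>) \<le> int (card S) * Bh * D"
      using sum_mono[of S "\<lambda>l. \<bar>h k l * d l\<bar>" "\<lambda>_. Bh * D"] by (simp add: mult.assoc)
    hence "\<bar>\<Sum>l\<in>S. h k l * d l\<bar> \<le> int (card S) * Bh * D" by (rule order_trans[OF sum_abs])
    moreover have "\<bar>c * d k\<bar> \<le> c * D" using sol that \<open>c > 0\<close> by (simp add: abs_mult)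
    ultimately have "\<bar>(\<Sum>l\<in>S. h k l * d l) - c * d k\<bar> \<le> int (card S) * Bh * D + c * D"
      using abs_triangle_ineq4[of "\<Sum>l\<in>S. h k l * d l" "c * d k"] by linarith
    also have "\<dots> < W"
      using BW \<open>0 \<le> D\<close> \<open>c > 0\<close> mult_nonneg_nonneg[OF Bh(2) of_nat_0_le_iff[of "card S"]]
      by (simp add: algebra_simps)
    finally show "\<bar>(\<Sum>l\<in>S. h k l * d l) - c * d k\<bar> < W" .
  qed
  define z where "z l = w l div c" for l
  have cz: "c * z l = w l" and L_z: "L dvd z l" if "l \<in> S" for l
  proof -
    have "c * L dvd w l" using cLW W_w[OF that] by (rule dvd_trans)
    then obtain t where "w l = c * L * t" ..
    thus "c * z l = w l" "L dvd z l" using \<open>c > 0\<close> unfolding z_def by simp_all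
  qed
  define x' where "x' i = x i - (\<Sum>l\<in>S. g i l * z l)" for i
  have "(\<Sum>i<M. v k i * x' i) = d k" if "k \<in> S" for k
  proof -
    have "c * (\<Sum>l\<in>S. h k l * z l) = (\<Sum>l\<in>S. h k l * w l)"
      unfolding sum_distrib_left by (intro sum.cong refl) (simp add: mult.left_commute cz)
    also have "\<dots> = (\<Sum>l\<in>S. h k l * (\<Sum>i<M. v l i * x i)) - (\<Sum>l\<in>S. h k l * d l)"
      unfolding w_def by (simp add: right_diff_distrib sum_subtractf)
    also have "\<dots> = c * w k" using h_apply[OF that] h_d[OF that] unfolding w_def by (simp add: right_diff_distrib)
    finally have "(\<Sum>l\<in>S. h k l * z l) = w k" using \<open>c > 0\<close> by simp
    moreover have "(\<Sum>l\<in>S. h k l * z l) = (\<Sum>i<M. v k i * (\<Sum>l\<in>S. g i l * z l))"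
      unfolding h_def sum_distrib_left sum_distrib_right mult.assoc by (rule sum.swap)
    hence "(\<Sum>i<M. v k i * x' i) = (\<Sum>i<M. v k i * x i) - (\<Sum>l\<in>S. h k l * z l)"
      unfolding x'_def by (simp add: right_diff_distrib sum_subtractf)
    ultimately show ?thesis unfolding w_def by simp
  qed
  moreover have "L dvd x' i - x i" for i unfolding x'_def using L_z by (auto intro: dvd_sum)
  ultimately show "\<exists>x'. (\<forall>k\<in>S. (\<Sum>i<M. v k i * x' i) = d k) \<and> (\<forall>i<M. L dvd x' i - x i)" by blast
qed

lemma exists_exact_lifting:
  fixes v :: "'k \<Rightarrow> nat \<Rightarrow> int"
  assumes "finite S"
  shows "\<exists>c>0. \<exists>B. exact_lifting v S M c B"
proof -
  obtain g c where "c > 0" and gen_inv: "\<forall>k\<in>S. \<forall>j<M. (\<Sum>l\<in>S. (\<Sum>i<M. v k i * g i l) * v l j) = c * v k j"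
    using exists_int_generalized_inverse[OF assms] by blast
  define Bh where "Bh = (\<Sum>k\<in>S. \<Sum>l\<in>S. \<bar>\<Sum>i<M. v k i * g i l\<bar>)"
  have "\<bar>\<Sum>i<M. v k i * g i l\<bar> \<le> Bh" if "k \<in> S" "l \<in> S" for k l
    using that assms member_le_sum[of l S "\<lambda>l. \<bar>\<Sum>i<M. v k i * g i l\<bar>"]
      member_le_sum[of k S "\<lambda>k. \<Sum>l\<in>S. \<bar>\<Sum>i<M. v k i * g i l\<bar>"] unfolding Bh_def by (auto intro: sum_nonneg)
  moreover have "Bh \<ge> 0" unfolding Bh_def by (auto intro: sum_nonneg)
  ultimately have "exact_lifting v S M c (int (card S) * Bh + c + 1)"
    using exact_lifting_if_generalized_inverse[OF assms \<open>c > 0\<close> gen_inv] by blast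
  thus ?thesis using \<open>c > 0\<close> by blast
qed

lemma exists_uniform_exact_lifting:
  fixes v :: "'k \<Rightarrow> nat \<Rightarrow> int"
  assumes "finite R"
  shows "\<exists>c>0. \<exists>B. \<forall>S\<subseteq>R. exact_lifting v S M c B"
proof -
  have "\<forall>S. \<exists>cB. S \<subseteq> R \<longrightarrow> fst cB > 0 \<and> exact_lifting v S M (fst cB) (snd cB)"
  proof
    fix S
    show "\<exists>cB. S \<subseteq> R \<longrightarrow> fst cB > 0 \<and> exact_lifting v S M (fst cB) (snd cB)"
    proof (cases "S \<subseteq> R")
      case True
      then obtain c B where "c > 0" "exact_lifting v S M c B"
        using exists_exact_lifting[OF finite_subset[OF True assms]] by blast
      thus ?thesis by (intro exI[of _ "(c, B)"]) simp
    qed simp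
  qed
  then obtain cB where cB: "\<forall>S. S \<subseteq> R \<longrightarrow> fst (cB S) > 0 \<and> exact_lifting v S M (fst (cB S)) (snd (cB S))"
    by (rule choice[THEN exE])
  define c where "c = (\<Prod>S\<in>Pow R. fst (cB S))"
  define B where "B = (\<Sum>S\<in>Pow R. \<bar>snd (cB S)\<bar>)"
  have "c > 0" unfolding c_def using cB by (intro prod_pos) auto
  moreover have "exact_lifting v S M c B" if "S \<subseteq> R" for S
  proof (rule exact_lifting_mono)
    show "exact_lifting v S M (fst (cB S)) (snd (cB S))" using cB that by blast
    show "fst (cB S) dvd c" unfolding c_def using assms that by (intro dvd_prodI) auto
    have "snd (cB S) \<le> \<bar>snd (cB S)\<bar>" by simp
    also have "\<dots> \<le> B" unfolding B_def using assms that by (intro member_le_sum) auto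
    finally show "snd (cB S) \<le> B" .
  qed
  ultimately show ?thesis by blast
qed

section \<open>Exact zeros near the given exponents\<close>

text \<open>Clearing the denominator \<open>T\<^sup>t\<close> turns divisibility by \<open>Q = (T\<^sup>W - 1)/(T\<^sup>N - 1)\<close> of
  \<open>c(T\<^sup>x)\<close> into divisibility of a polynomial by \<open>T\<^sup>W - 1\<close> after multiplication by \<open>T\<^sup>N - 1\<close>,
  so a rotation of the exponents modulo \<open>W\<close> makes the sum vanish.\<close>
lemma exists_rotated_exponents:
  fixes c :: "(nat \<Rightarrow> nat) \<Rightarrow> 'a::field poly"
  assumes "finite {\<alpha>. c \<alpha> \<noteq> 0}" "\<forall>\<alpha>. c \<alpha> \<noteq> 0 \<longrightarrow> degree (c \<alpha>) < D"
    and "N > 0" "card {\<alpha>. c \<alpha> \<noteq> 0} * (D + 1) < l"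
    and "rf_dvd (geom_X_sum N l) (eval_Tpow M c x)"
  shows "\<exists>s b. (\<Sum>\<alpha> | c \<alpha> \<noteq> 0. c \<alpha> * [:0, 1:] ^ b \<alpha>) = 0 \<and>
    (\<forall>\<alpha>. c \<alpha> \<noteq> 0 \<longrightarrow> int (N * l) dvd monomial_exponent M \<alpha> x + s - int (b \<alpha>))"
proof -
  let ?A = "{\<alpha>. c \<alpha> \<noteq> 0}" and ?W = "N * l"
  define t where "t = (\<Sum>\<alpha>\<in>?A. nat \<bar>monomial_exponent M \<alpha> x\<bar>)"
  have t: "monomial_exponent M \<alpha> x + int t \<ge> 0" if "\<alpha> \<in> ?A" for \<alpha>
    using member_le_sum[OF that, of "\<lambda>\<alpha>. nat \<bar>monomial_exponent M \<alpha> x\<bar>"] assms(1) unfolding t_def by linarith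
  define b where "b \<alpha> = nat (monomial_exponent M \<alpha> x + int t)" for \<alpha>
  define R where "R = (\<Sum>\<alpha>\<in>?A. c \<alpha> * [:0, 1::'a:] ^ b \<alpha>)"
  have "eval_Tpow M c x * rf_of_poly ([:0, 1:] ^ t) = rf_of_poly R"
    unfolding eval_Tpow_eq_sum_Tpow R_def b_def using t by (intro sum_Tpow_mult_X_power) auto
  hence "geom_X_sum N l dvd R" using assms(5) by (rule rf_dvd_imp_dvd[rotated])
  hence "([:0, 1:] ^ ?W - 1) dvd R * ([:0, 1:] ^ N - 1)"
    by (metis geom_X_sum_mult mult_dvd_mono dvd_refl)
  moreover have "card ?A * (D + degree ([:0, 1::'a:] ^ N - 1)) < ?W"
  proof -
    have "card ?A * (D + N) \<le> card ?A * (D + 1) * N" using assms(3) by (simp add: algebra_simps)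
    also have "\<dots> < l * N" using assms(3,4) by simp
    finally show ?thesis using degree_X_power_minus_1[OF assms(3), where 'a='a] by (simp add: mult.commute)
  qed
  moreover have "[:0, 1::'a:] ^ N - 1 \<noteq> 0"
    using degree_X_power_minus_1[OF assms(3), where 'a='a] assms(3) by auto
  ultimately obtain u where u: "(\<Sum>\<alpha>\<in>?A. c \<alpha> * [:0, 1:] ^ ((b \<alpha> + u) mod ?W)) = 0"
    using exists_rotation_eq_0[where K="?A" and c=c and b=b and H="[:0, 1::'a:] ^ N - 1" and D=D and W="?W"]
      assms(1,2) unfolding R_def by auto
  have "int ?W dvd monomial_exponent M \<alpha> x + int (t + u) - int ((b \<alpha> + u) mod ?W)" if "\<alpha> \<in> ?A" for \<alpha>
  proof -
    have "monomial_exponent M \<alpha> x + int (t + u) = int (b \<alpha> + u)" using t[OF that] unfolding b_def by simp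
    moreover have "int ?W dvd int (b \<alpha> + u) - int ((b \<alpha> + u) mod ?W)"
      unfolding zmod_int by (rule dvd_minus_mod)
    ultimately show ?thesis by (simp only:)
  qed
  thus ?thesis using u by (intro exI[of _ "int (t + u)"] exI[of _ "\<lambda>\<alpha>. (b \<alpha> + u) mod ?W"]) auto
qed

lemma eval_Tpow_eq_0_if_linked:
  fixes c :: "(nat \<Rightarrow> nat) \<Rightarrow> 'a::field poly"
  assumes "finite {\<alpha>. c \<alpha> \<noteq> 0}" "\<forall>\<alpha>. c \<alpha> \<noteq> 0 \<longrightarrow> degree (c \<alpha>) < D"
    and "(\<Sum>\<alpha> | c \<alpha> \<noteq> 0. c \<alpha> * [:0, 1:] ^ b \<alpha>) = 0"
    and "\<forall>\<alpha>\<in>{\<alpha>. c \<alpha> \<noteq> 0}. \<forall>\<alpha>'\<in>{\<alpha>. c \<alpha> \<noteq> 0}. linked {\<alpha>. c \<alpha> \<noteq> 0} b D \<alpha> \<alpha>' \<longrightarrow>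
      monomial_exponent M \<alpha> y - int (b \<alpha>) = monomial_exponent M \<alpha>' y - int (b \<alpha>')"
  shows "eval_Tpow M c y = 0"
proof -
  let ?A = "{\<alpha>. c \<alpha> \<noteq> 0}"
  have "eval_Tpow M c y = (\<Sum>\<alpha>\<in>?A. rf_of_poly (c \<alpha> * [:0, 1:] ^ b \<alpha>) * Tpow (monomial_exponent M \<alpha> y - int (b \<alpha>)))"
    unfolding eval_Tpow_eq_sum_Tpow
    by (intro sum.cong refl) (simp add: rf_of_poly_mult mult.assoc flip: Tpow_of_nat Tpow_add)
  also have "\<dots> = 0"
  proof (rule sum_Tpow_eq_0_if_linked[OF assms(1) _ assms(3,4)])
    show "\<forall>\<alpha>\<in>?A. \<forall>i. coeff (c \<alpha> * [:0, 1:] ^ b \<alpha>) i \<noteq> 0 \<longrightarrow> b \<alpha> \<le> i \<and> i < b \<alpha> + D"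
    proof (intro ballI allI impI)
      fix \<alpha> i assume "\<alpha> \<in> ?A" "coeff (c \<alpha> * [:0, 1:] ^ b \<alpha>) i \<noteq> 0"
      hence "coeff (monom 1 (b \<alpha>) * c \<alpha>) i \<noteq> 0" by (simp add: monom_altdef mult.commute)
      hence "b \<alpha> \<le> i" "coeff (c \<alpha>) (i - b \<alpha>) \<noteq> 0" by (simp_all add: coeff_monom_mult split: if_splits)
      moreover have "degree (c \<alpha>) < D" using assms(2) \<open>\<alpha> \<in> ?A\<close> by simp
      ultimately show "b \<alpha> \<le> i \<and> i < b \<alpha> + D" using le_degree[of "c \<alpha>" "i - b \<alpha>"] by linarith
    qed
  qed
  finally show ?thesis .
qed

definition monomial_terms :: "nat \<Rightarrow> (nat \<Rightarrow> (nat \<Rightarrow> nat) \<Rightarrow> 'a::zero) \<Rightarrow> (nat \<times> (nat \<Rightarrow> nat)) set" where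
  "monomial_terms J f = {(j, \<alpha>). j < J \<and> f j \<alpha> \<noteq> 0}"

lemma finite_monomial_terms:
  assumes "\<forall>j<J. finite {\<alpha>. f j \<alpha> \<noteq> 0}"
  shows "finite (monomial_terms J f)"
proof -
  have "monomial_terms J f = (\<Union>j<J. Pair j ` {\<alpha>. f j \<alpha> \<noteq> 0})" unfolding monomial_terms_def by auto
  thus ?thesis using assms by simp
qed

lemma card_support_le_card_monomial_terms:
  assumes "finite (monomial_terms J f)" "j < J"
  shows "card {\<alpha>. f j \<alpha> \<noteq> 0} \<le> card (monomial_terms J f)"
proof -
  have "card {\<alpha>. f j \<alpha> \<noteq> 0} = card (Pair j ` {\<alpha>. f j \<alpha> \<noteq> 0})" by (simp add: card_image inj_on_def)
  also have "\<dots> \<le> card (monomial_terms J f)"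
    using assms by (intro card_mono) (auto simp: monomial_terms_def)
  finally show ?thesis .
qed

lemma exists_rotated_exponents_family:
  fixes f :: "nat \<Rightarrow> (nat \<Rightarrow> nat) \<Rightarrow> 'a::field poly"
  assumes fin: "\<forall>j<J. finite {\<alpha>. f j \<alpha> \<noteq> 0}"
    and deg: "\<forall>j<J. \<forall>\<alpha>. f j \<alpha> \<noteq> 0 \<longrightarrow> degree (f j \<alpha>) < D"
    and "N > 0" "card (monomial_terms J f) * (D + 1) < l"
    and dvd: "\<forall>j<J. rf_dvd (geom_X_sum N l) (eval_Tpow M (f j) x)"
  shows "\<exists>s b. \<forall>j<J. (\<Sum>\<alpha> | f j \<alpha> \<noteq> 0. f j \<alpha> * [:0, 1:] ^ b j \<alpha>) = 0 \<and>
    (\<forall>\<alpha>. f j \<alpha> \<noteq> 0 \<longrightarrow> int (N * l) dvd monomial_exponent M \<alpha> x + s j - int (b j \<alpha>))"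
proof -
  have "\<forall>j. \<exists>sb. j < J \<longrightarrow> (\<Sum>\<alpha> | f j \<alpha> \<noteq> 0. f j \<alpha> * [:0, 1:] ^ snd sb \<alpha>) = 0 \<and>
      (\<forall>\<alpha>. f j \<alpha> \<noteq> 0 \<longrightarrow> int (N * l) dvd monomial_exponent M \<alpha> x + fst sb - int (snd sb \<alpha>))"
  proof
    fix j
    show "\<exists>sb. j < J \<longrightarrow> (\<Sum>\<alpha> | f j \<alpha> \<noteq> 0. f j \<alpha> * [:0, 1:] ^ snd sb \<alpha>) = 0 \<and>
      (\<forall>\<alpha>. f j \<alpha> \<noteq> 0 \<longrightarrow> int (N * l) dvd monomial_exponent M \<alpha> x + fst sb - int (snd sb \<alpha>))"
    proof (cases "j < J")
      case True
      have "card {\<alpha>. f j \<alpha> \<noteq> 0} * (D + 1) < l"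
        using card_support_le_card_monomial_terms[OF finite_monomial_terms[OF fin] True] assms(4)
        by (meson le_less_trans mult_le_mono1)
      then obtain s b where "(\<Sum>\<alpha> | f j \<alpha> \<noteq> 0. f j \<alpha> * [:0, 1:] ^ b \<alpha>) = 0"
          "\<forall>\<alpha>. f j \<alpha> \<noteq> 0 \<longrightarrow> int (N * l) dvd monomial_exponent M \<alpha> x + s - int (b \<alpha>)"
        using exists_rotated_exponents[of "f j" D N l M x] fin deg dvd assms(3) True by blast
      thus ?thesis by (intro exI[of _ "(s, b)"]) simp
    qed simp
  qed
  then obtain sb where "\<forall>j. j < J \<longrightarrow> (\<Sum>\<alpha> | f j \<alpha> \<noteq> 0. f j \<alpha> * [:0, 1:] ^ snd (sb j) \<alpha>) = 0 \<and>
      (\<forall>\<alpha>. f j \<alpha> \<noteq> 0 \<longrightarrow> int (N * l) dvd monomial_exponent M \<alpha> x + fst (sb j) - int (snd (sb j) \<alpha>))"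
    by (rule choice[THEN exE])
  thus ?thesis by (intro exI[of _ "fst \<circ> sb"] exI[of _ "snd \<circ> sb"]) simp
qed

definition exponent_gap :: "(nat \<times> (nat \<Rightarrow> nat)) \<times> (nat \<times> (nat \<Rightarrow> nat)) \<Rightarrow> nat \<Rightarrow> int" where
  "exponent_gap pq i = int (snd (fst pq) i) - int (snd (snd pq) i)"

lemma sum_exponent_gap:
  "(\<Sum>i<M. exponent_gap ((j, \<alpha>), (j', \<alpha>')) i * y i) = monomial_exponent M \<alpha> y - monomial_exponent M \<alpha>' y"
  unfolding exponent_gap_def by (simp add: monomial_exponent_diff)

definition linked_pairs :: "nat \<Rightarrow> (nat \<Rightarrow> (nat \<Rightarrow> nat) \<Rightarrow> 'a::zero) \<Rightarrow> (nat \<Rightarrow> (nat \<Rightarrow> nat) \<Rightarrow> nat) \<Rightarrow> nat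
    \<Rightarrow> ((nat \<times> (nat \<Rightarrow> nat)) \<times> (nat \<times> (nat \<Rightarrow> nat))) set" where
  "linked_pairs J f b D = {((j, \<alpha>), (j', \<alpha>')). j < J \<and> j' = j \<and> f j \<alpha> \<noteq> 0 \<and> f j \<alpha>' \<noteq> 0 \<and>
     linked {\<alpha>. f j \<alpha> \<noteq> 0} (b j) D \<alpha> \<alpha>'}"

definition position_gap :: "(nat \<Rightarrow> (nat \<Rightarrow> nat) \<Rightarrow> nat) \<Rightarrow> (nat \<times> (nat \<Rightarrow> nat)) \<times> (nat \<times> (nat \<Rightarrow> nat)) \<Rightarrow> int" where
  "position_gap b pq = int (b (fst (fst pq)) (snd (fst pq))) - int (b (fst (fst pq)) (snd (snd pq)))"

lemma linked_pairs_subset: "linked_pairs J f b D \<subseteq> monomial_terms J f \<times> monomial_terms J f"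
  unfolding linked_pairs_def monomial_terms_def by auto

lemma linked_pairs_congruent:
  assumes fin: "\<forall>j<J. finite {\<alpha>. f j \<alpha> \<noteq> 0}"
    and cong: "\<forall>j<J. \<forall>\<alpha>. f j \<alpha> \<noteq> 0 \<longrightarrow> W dvd monomial_exponent M \<alpha> x + s j - int (b j \<alpha>)"
    and "pq \<in> linked_pairs J f b D"
  shows "\<bar>position_gap b pq\<bar> \<le> int (card (monomial_terms J f)) * int D"
    and "W dvd (\<Sum>i<M. exponent_gap pq i * x i) - position_gap b pq"
proof -
  obtain j \<alpha> \<alpha>' where pq: "pq = ((j, \<alpha>), (j, \<alpha>'))" "j < J" "f j \<alpha> \<noteq> 0" "f j \<alpha>' \<noteq> 0"
    "linked {\<alpha>. f j \<alpha> \<noteq> 0} (b j) D \<alpha> \<alpha>'"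
    using assms(3) unfolding linked_pairs_def by auto
  have "\<bar>position_gap b pq\<bar> < int (card {\<alpha>. f j \<alpha> \<noteq> 0} * D)"
    unfolding pq(1) position_gap_def using linked_distance_less[OF _ pq(5)] fin pq(2) by simp
  moreover have "int (card {\<alpha>. f j \<alpha> \<noteq> 0} * D) \<le> int (card (monomial_terms J f)) * int D"
    using card_support_le_card_monomial_terms[OF finite_monomial_terms[OF fin] pq(2)] by (simp flip: of_nat_mult)
  ultimately show "\<bar>position_gap b pq\<bar> \<le> int (card (monomial_terms J f)) * int D" by simp
  have "(\<Sum>i<M. exponent_gap pq i * x i) - position_gap b pq
      = (monomial_exponent M \<alpha> x + s j - int (b j \<alpha>)) - (monomial_exponent M \<alpha>' x + s j - int (b j \<alpha>'))"
    unfolding pq(1) position_gap_def sum_exponent_gap by simp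
  moreover have "W dvd (monomial_exponent M \<alpha> x + s j - int (b j \<alpha>)) - (monomial_exponent M \<alpha>' x + s j - int (b j \<alpha>'))"
    using cong pq(2-4) by (blast intro: dvd_diff)
  ultimately show "W dvd (\<Sum>i<M. exponent_gap pq i * x i) - position_gap b pq" by simp
qed

lemma eval_Tpow_eq_0_if_linked_pairs_exact:
  fixes f :: "nat \<Rightarrow> (nat \<Rightarrow> nat) \<Rightarrow> 'a::field poly"
  assumes "finite {\<alpha>. f j \<alpha> \<noteq> 0}" "\<forall>\<alpha>. f j \<alpha> \<noteq> 0 \<longrightarrow> degree (f j \<alpha>) < D" "j < J"
    and "(\<Sum>\<alpha> | f j \<alpha> \<noteq> 0. f j \<alpha> * [:0, 1:] ^ b j \<alpha>) = 0"
    and exact: "\<forall>pq\<in>linked_pairs J f b D. (\<Sum>i<M. exponent_gap pq i * y i) = position_gap b pq"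
  shows "eval_Tpow M (f j) y = 0"
proof (rule eval_Tpow_eq_0_if_linked[OF assms(1,2,4)], intro ballI impI)
  fix \<alpha> \<alpha>' assume "\<alpha> \<in> {\<alpha>. f j \<alpha> \<noteq> 0}" "\<alpha>' \<in> {\<alpha>. f j \<alpha> \<noteq> 0}" "linked {\<alpha>. f j \<alpha> \<noteq> 0} (b j) D \<alpha> \<alpha>'"
  hence "((j, \<alpha>), (j, \<alpha>')) \<in> linked_pairs J f b D" using assms(3) unfolding linked_pairs_def by simp
  hence "(\<Sum>i<M. exponent_gap ((j, \<alpha>), (j, \<alpha>')) i * y i) = position_gap b ((j, \<alpha>), (j, \<alpha>'))"
    using exact by blast
  thus "monomial_exponent M \<alpha> y - int (b j \<alpha>) = monomial_exponent M \<alpha>' y - int (b j \<alpha>')"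
    unfolding position_gap_def sum_exponent_gap by simp
qed

text \<open>After rotation, the linked pairs of terms give a linear system for the exponents, with small
  right-hand sides, that \<open>x\<close> solves modulo \<open>W\<close>; an exact solution congruent to \<open>x\<close> makes every
  \<open>f\<^sub>j(T\<^sup>x\<^sup>')\<close> vanish.\<close>
lemma exists_exact_zero_near:
  fixes f :: "nat \<Rightarrow> (nat \<Rightarrow> nat) \<Rightarrow> 'a::field poly" and x :: "nat \<Rightarrow> int" and c L B :: int
  assumes fin: "\<forall>j<J. finite {\<alpha>. f j \<alpha> \<noteq> 0}"
    and deg: "\<forall>j<J. \<forall>\<alpha>. f j \<alpha> \<noteq> 0 \<longrightarrow> degree (f j \<alpha>) < D"
    and lift: "\<forall>S\<subseteq>monomial_terms J f \<times> monomial_terms J f. exact_lifting exponent_gap S M c B"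
    and N: "N > 0" "int N = c * L"
    and l: "card (monomial_terms J f) * (D + 1) < l" "B * (int (card (monomial_terms J f)) * int D + 1) < int l"
    and dvd: "\<forall>j<J. rf_dvd (geom_X_sum N l) (eval_Tpow M (f j) x)"
  shows "\<exists>x'. (\<forall>j<J. eval_Tpow M (f j) x' = 0) \<and> (\<forall>i<M. L dvd x' i - x i)"
proof -
  obtain s b where rot: "\<forall>j<J. (\<Sum>\<alpha> | f j \<alpha> \<noteq> 0. f j \<alpha> * [:0, 1:] ^ b j \<alpha>) = 0 \<and>
      (\<forall>\<alpha>. f j \<alpha> \<noteq> 0 \<longrightarrow> int (N * l) dvd monomial_exponent M \<alpha> x + s j - int (b j \<alpha>))"
    using exists_rotated_exponents_family[OF fin deg N(1) l(1) dvd] by blast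
  have "exact_lifting exponent_gap (linked_pairs J f b D) M c B"
    using lift linked_pairs_subset by blast
  moreover have "c * L dvd int (N * l)" using N(2) by simp
  moreover have "int l \<le> int (N * l)" using N(1) by (subst of_nat_le_iff) simp
  hence "B * (int (card (monomial_terms J f)) * int D + 1) < int (N * l)" using l(2) by linarith
  moreover have "0 \<le> int (card (monomial_terms J f)) * int D" by simp
  moreover have "\<forall>j<J. \<forall>\<alpha>. f j \<alpha> \<noteq> 0 \<longrightarrow> int (N * l) dvd monomial_exponent M \<alpha> x + s j - int (b j \<alpha>)"
    using rot by blast
  hence "\<forall>pq\<in>linked_pairs J f b D. \<bar>position_gap b pq\<bar> \<le> int (card (monomial_terms J f)) * int D \<and>
      int (N * l) dvd (\<Sum>i<M. exponent_gap pq i * x i) - position_gap b pq"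
    using linked_pairs_congruent[OF fin] by blast
  ultimately have "\<exists>x'. (\<forall>pq\<in>linked_pairs J f b D. (\<Sum>i<M. exponent_gap pq i * x' i) = position_gap b pq) \<and>
      (\<forall>i<M. L dvd x' i - x i)"
    unfolding exact_lifting_def by (elim allE impE) blast+
  then obtain x' where x': "\<forall>pq\<in>linked_pairs J f b D. (\<Sum>i<M. exponent_gap pq i * x' i) = position_gap b pq"
    "\<forall>i<M. L dvd x' i - x i"
    by blast
  have "eval_Tpow M (f j) x' = 0" if "j < J" for j
    by (rule eval_Tpow_eq_0_if_linked_pairs_exact[where b = b and D = D and J = J])
      (use fin deg rot x'(1) that in auto)
  thus ?thesis using x'(2) by blast
qed

lemma eventually_exact_zeros_congruent:
  fixes S :: "'a::{field,finite} poly set" and f :: "nat \<Rightarrow> (nat \<Rightarrow> nat) \<Rightarrow> 'a poly"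
    and e :: "nat \<Rightarrow> nat \<Rightarrow> int" and L :: int
  assumes "finite S" "\<forall>\<pi>\<in>S. irreducible \<pi>" "\<forall>j<J. finite {\<alpha>. f j \<alpha> \<noteq> 0}"
    and "\<forall>Q. Q \<noteq> 0 \<and> (\<forall>\<pi>\<in>S. \<not> \<pi> dvd Q) \<longrightarrow> (\<exists>NQ. \<forall>n\<ge>NQ. \<forall>j<J. rf_dvd Q (eval_Tpow M (f j) (e n)))"
    and "L > 0"
  shows "\<exists>n0. \<forall>n\<ge>n0. \<exists>x. (\<forall>j<J. eval_Tpow M (f j) x = 0) \<and> (\<forall>i<M. L dvd x i - e n i)"
proof -
  let ?T = "monomial_terms J f"
  have "finite ?T" by (rule finite_monomial_terms[OF assms(3)])
  then obtain c B where "c > 0" and lift: "\<forall>S\<subseteq>?T \<times> ?T. exact_lifting exponent_gap S M c B"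
    using exists_uniform_exact_lifting[of "?T \<times> ?T" exponent_gap M] by blast
  define D where "D = Suc (\<Sum>p\<in>?T. degree (f (fst p) (snd p)))"
  have deg: "\<forall>j<J. \<forall>\<alpha>. f j \<alpha> \<noteq> 0 \<longrightarrow> degree (f j \<alpha>) < D"
  proof (intro allI impI)
    fix j \<alpha> assume "j < J" "f j \<alpha> \<noteq> 0"
    hence "(j, \<alpha>) \<in> ?T" by (simp add: monomial_terms_def)
    thus "degree (f j \<alpha>) < D"
      using member_le_sum[of "(j, \<alpha>)" ?T "\<lambda>p. degree (f (fst p) (snd p))"] \<open>finite ?T\<close> unfolding D_def by simp
  qed
  define N where "N = nat (c * L)"
  have N: "N > 0" "int N = c * L" using \<open>c > 0\<close> assms(5) unfolding N_def by simp_all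
  obtain l where l: "card ?T * (D + 1) + nat (B * (int (card ?T) * int D + 1)) < l"
    and avoid: "\<forall>\<pi>\<in>S. \<not> \<pi> dvd geom_X_sum N l"
    using exists_geom_X_sum_avoiding[OF assms(1,2) N(1),
        where K = "card ?T * (D + 1) + nat (B * (int (card ?T) * int D + 1))"] by blast
  have "geom_X_sum N l \<noteq> (0 :: 'a poly)" using l N(1) by (intro geom_X_sum_nonzero) auto
  then obtain n0 where n0: "\<forall>n\<ge>n0. \<forall>j<J. rf_dvd (geom_X_sum N l) (eval_Tpow M (f j) (e n))"
    using assms(4)[rule_format, OF conjI[OF _ avoid]] by blast
  have "card ?T * (D + 1) < l" "B * (int (card ?T) * int D + 1) < int l" using l by linarith+
  note near = exists_exact_zero_near[OF assms(3) deg lift N this]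
  show ?thesis
    by (intro exI[of _ n0] allI impI near) (use n0 in blast)
qed

text \<open>Choosing for \<open>n\<close> a solution congruent to \<open>e n\<close> modulo \<open>m!\<close>, with \<open>m = m(n)\<close> the largest index
  whose threshold lies below \<open>n\<close>, makes the congruence hold eventually modulo every \<open>d\<close>.\<close>
lemma exists_diagonal_solutions:
  fixes P :: "(nat \<Rightarrow> int) \<Rightarrow> bool" and e :: "nat \<Rightarrow> nat \<Rightarrow> int"
  assumes "\<forall>L>0. \<exists>n0. \<forall>n\<ge>n0. \<exists>x. P x \<and> (\<forall>i<M. L dvd x i - e n i)"
  shows "\<exists>\<N> e'. infinite \<N> \<and> (\<forall>n\<in>\<N>. P (e' n)) \<and>
    (\<forall>d>0. \<exists>n0. \<forall>n\<in>\<N>. n0 \<le> n \<longrightarrow> (\<forall>i<M. int d dvd e' n i - e n i))"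
proof -
  have "\<forall>m. \<exists>n0. \<forall>n\<ge>n0. \<exists>x. P x \<and> (\<forall>i<M. int (fact m) dvd x i - e n i)"
    using assms by (simp add: fact_gt_zero)
  then obtain n0 where n0: "\<forall>m. \<forall>n\<ge>n0 m. \<exists>x. P x \<and> (\<forall>i<M. int (fact m) dvd x i - e n i)"
    by (rule choice[THEN exE])
  define \<N> where "\<N> = {n. n0 0 \<le> n}"
  define m where "m n = Max {k. k \<le> n \<and> n0 k \<le> n}" for n
  have m: "n0 (m n) \<le> n" "k \<le> n \<Longrightarrow> n0 k \<le> n \<Longrightarrow> k \<le> m n" if "n \<in> \<N>" for n k
  proof -
    have "finite {k. k \<le> n \<and> n0 k \<le> n}" "0 \<in> {k. k \<le> n \<and> n0 k \<le> n}" using that unfolding \<N>_def by auto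
    thus "n0 (m n) \<le> n" "k \<le> n \<Longrightarrow> n0 k \<le> n \<Longrightarrow> k \<le> m n"
      unfolding m_def using Max_in[of "{k. k \<le> n \<and> n0 k \<le> n}"] Max_ge by blast+
  qed
  define e' where "e' n = (SOME x. P x \<and> (\<forall>i<M. int (fact (m n)) dvd x i - e n i))" for n
  have e': "P (e' n) \<and> (\<forall>i<M. int (fact (m n)) dvd e' n i - e n i)" if "n \<in> \<N>" for n
  proof -
    have "\<exists>x. P x \<and> (\<forall>i<M. int (fact (m n)) dvd x i - e n i)" using n0 m(1)[OF that] by blast
    thus ?thesis unfolding e'_def by (rule someI_ex)
  qed
  show ?thesis
  proof (intro exI[of _ \<N>] exI[of _ e'] conjI allI impI ballI)
    have "max k (n0 0) \<in> \<N> \<and> k \<le> max k (n0 0)" for k unfolding \<N>_def by simp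
    thus "infinite \<N>" unfolding infinite_nat_iff_unbounded_le by blast
    show "P (e' n)" if "n \<in> \<N>" for n using e'[OF that] ..
    fix d :: nat assume "d > 0"
    show "\<exists>n0. \<forall>n\<in>\<N>. n0 \<le> n \<longrightarrow> (\<forall>i<M. int d dvd e' n i - e n i)"
    proof (intro exI[of _ "max d (n0 d)"] ballI impI allI)
      fix n i assume "n \<in> \<N>" "max d (n0 d) \<le> n" "i < M"
      hence "d dvd fact (m n)" using m(2) \<open>d > 0\<close> by (intro dvd_fact) auto
      hence "int d dvd int (fact (m n))" by (simp only: int_dvd_int_iff)
      moreover have "int (fact (m n)) dvd e' n i - e n i" using e' \<open>n \<in> \<N>\<close> \<open>i < M\<close> by blast
      ultimately show "int d dvd e' n i - e n i" by (rule dvd_trans)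
    qed
  qed
qed

theorem proposition7:
  fixes S :: "'a::{field,finite} poly set"
    and J M :: nat
    and f :: "nat \<Rightarrow> (nat \<Rightarrow> nat) \<Rightarrow> 'a poly"
    and e :: "nat \<Rightarrow> nat \<Rightarrow> int"
  assumes "finite S"
    and "\<forall>\<pi>\<in>S. irreducible \<pi>"
    and "\<forall>j<J. is_mpoly M (f j)"
    and "\<forall>Q. Q \<noteq> 0 \<and> (\<forall>\<pi>\<in>S. \<not> \<pi> dvd Q) \<longrightarrow>
           (\<exists>NQ. \<forall>n\<ge>NQ. \<forall>j<J. rf_dvd Q (eval_Tpow M (f j) (e n)))"
  shows "\<exists>\<N> :: nat set. \<exists>e' :: nat \<Rightarrow> nat \<Rightarrow> int. infinite \<N> \<and>
           (\<forall>n\<in>\<N>. \<forall>j<J. eval_Tpow M (f j) (e' n) = 0) \<and>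
           (\<forall>Q :: 'a poly. \<not> [:0, 1:] dvd Q \<longrightarrow>
              (\<exists>NQ. \<forall>n\<in>\<N>. n \<ge> NQ \<longrightarrow>
                 (\<forall>i<M. rf_dvd Q (Tpow (e n i) - Tpow (e' n i)))))"
proof -
  \<comment> \<open>Only the finiteness part of \<open>is_mpoly\<close> matters: \<open>eval_Tpow\<close> ignores the variables beyond \<open>M\<close>.\<close>
  have "\<forall>j<J. finite {\<alpha>. f j \<alpha> \<noteq> 0}" using assms(3) unfolding is_mpoly_def by blast
  hence "\<forall>L>0. \<exists>n0. \<forall>n\<ge>n0. \<exists>x. (\<forall>j<J. eval_Tpow M (f j) x = 0) \<and> (\<forall>i<M. L dvd x i - e n i)"
    by (intro allI impI) (rule eventually_exact_zeros_congruent[OF assms(1,2) _ assms(4)])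
  then obtain \<N> e' where "infinite \<N> \<and> (\<forall>n\<in>\<N>. \<forall>j<J. eval_Tpow M (f j) (e' n) = 0) \<and>
      (\<forall>d>0. \<exists>n0. \<forall>n\<in>\<N>. n0 \<le> n \<longrightarrow> (\<forall>i<M. int d dvd e' n i - e n i))"
    by (elim exists_diagonal_solutions[elim_format] exE) (rule that)
  hence \<N>: "infinite \<N>" "\<forall>n\<in>\<N>. \<forall>j<J. eval_Tpow M (f j) (e' n) = 0"
    and congruent: "\<forall>d>0. \<exists>n0. \<forall>n\<in>\<N>. n0 \<le> n \<longrightarrow> (\<forall>i<M. int d dvd e' n i - e n i)"
    by simp_all
  have "\<exists>NQ. \<forall>n\<in>\<N>. n \<ge> NQ \<longrightarrow> (\<forall>i<M. rf_dvd Q (Tpow (e n i) - Tpow (e' n i)))"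
    if Q: "\<not> [:0, 1:] dvd Q" for Q :: "'a poly"
  proof -
    have "Q \<noteq> 0" using Q by auto
    obtain d where "d > 0" and Q_dvd: "Q dvd [:0, 1:] ^ d - 1"
      using dvd_X_power_minus_one[OF \<open>Q \<noteq> 0\<close> Q] by auto
    obtain n0 where n0: "\<forall>n\<in>\<N>. n0 \<le> n \<longrightarrow> (\<forall>i<M. int d dvd e' n i - e n i)"
      using congruent \<open>d > 0\<close> by auto
    show ?thesis
    proof (intro exI[of _ n0] ballI impI allI)
      fix n i assume "n \<in> \<N>" "n0 \<le> n" "i < M"
      thus "rf_dvd Q (Tpow (e n i) - Tpow (e' n i))" using n0 by (intro rf_dvd_Tpow_diff[OF Q Q_dvd]) blast
    qed
  qed
  with \<N> show ?thesis by (intro exI[of _ \<N>] exI[of _ e'] conjI) auto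
qed

end
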